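(* In the Nakagami model with parameters $L_c>0$, $L_s>0$, the distortion exponent achievable by separate source and channel coding with rates scaling as $R_c=\frac{r_c}{2}\log_2\rho$, $R_s=\frac{r_s}{2}\log_2\rho$, $$\Delta_s(L_s,L_c):=\sup_{r_c>0,\ r_s\ge0}\ \lim_{\rho\to\infty}-\frac{\log ED_s\big(\tfrac{r_s}{2}\log_2\rho,\tfrac{r_c}{2}\log_2\rho\big)}{\log\rho},$$ equals $$\Delta_s(L_s,L_c)=\begin{cases}1-\dfrac{(1-L_s)^2}{L_c+1-L_s}&\text{if }L_s\le1,\\[2mm] \dfrac{L_s(2L_c+1)-L_c-1}{L_s(L_c+1)-1}&\text{if }L_s>1.\end{cases}$$
   Context: Nakagami model: for SNR $\rho>0$, the channel gain is $H=\rho H_0$ and the side-information gain is $\Gamma=\rho\Gamma_0$, where $H_0,\Gamma_0$ are independent, $H_0$ is Gamma distributed with shape $L_c$ and scale $1/L_c$, and $\Gamma_0$ is Gamma distributed with shape $L_s$ and scale $1/L_s$ (Gamma$(L,\theta)$ density $\frac{1}{\theta^L\Gamma(L)}x^{L-1}e^{-x/\theta}$, $x\ge0$). Logarithms base 2 unless ratios of logs. Define $D_d(R,\gamma)=(\gamma+2^{2R})^{-1}$. For $R_s\ge0,R_c>0$, the SSCC outage set is $\mathcal O_s=\{(h,\gamma): R_c\ge\tfrac12\log_2(1+h)\}\cup\{(h,\gamma): R_c\le \tfrac12\log_2(1+\tfrac{2^{2(R_s+R_c)}-1}{1+\gamma})\}$ and $ED_s(R_s,R_c)=\mathrm E[D_d(R_s+R_c,\Gamma)\mathbf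 1\{(H,\Gamma)\notin\mathcal O_s\}]+\mathrm E[D_d(0,\Gamma)\mathbf 1\{(H,\Gamma)\in\mathcal O_s\}]$ (a function of $\rho$ through $H,\Gamma$). *)

theory Defs
  imports "HOL-Analysis.Analysis"
begin

definition gamma_density :: "real \<Rightarrow> real \<Rightarrow> real \<Rightarrow> real" where
  "gamma_density L \<theta> x =
     (if 0 \<le> x then x powr (L - 1) * exp (- x / \<theta>) / (\<theta> powr L * Gamma L) else 0)"

definition gamma_dist :: "real \<Rightarrow> real \<Rightarrow> real measure" where
  "gamma_dist L \<theta> = density lborel (\<lambda>x. ennreal (gamma_density L \<theta> x))"

text \<open>Joint law of (H0, Gamma0): independent, H0 ~ Gamma(Lc, 1/Lc), Gamma0 ~ Gamma(Ls, 1/Ls).\<close>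
definition nakagami_law :: "real \<Rightarrow> real \<Rightarrow> (real \<times> real) measure" where
  "nakagami_law Lc Ls = gamma_dist Lc (1 / Lc) \<Otimes>\<^sub>M gamma_dist Ls (1 / Ls)"

definition D_d :: "real \<Rightarrow> real \<Rightarrow> real" where
  "D_d R \<gamma> = 1 / (\<gamma> + 2 powr (2 * R))"

definition outage_s :: "real \<Rightarrow> real \<Rightarrow> (real \<times> real) set" where
  "outage_s Rs Rc =
     {(h, \<gamma>). Rc \<ge> (1/2) * log 2 (1 + h)} \<union>
     {(h, \<gamma>). Rc \<le> (1/2) * log 2 (1 + (2 powr (2 * (Rs + Rc)) - 1) / (1 + \<gamma>))}"

definition ED_s :: "real \<Rightarrow> real \<Rightarrow> real \<Rightarrow> real \<Rightarrow> real \<Rightarrow> real" where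
  "ED_s Lc Ls \<rho> Rs Rc =
     (\<integral>p. (let h = \<rho> * fst p; \<gamma> = \<rho> * snd p in
             D_d (Rs + Rc) \<gamma> * indicator (- outage_s Rs Rc) (h, \<gamma>)
           + D_d 0 \<gamma> * indicator (outage_s Rs Rc) (h, \<gamma>))
      \<partial>nakagami_law Lc Ls)"

definition Delta_s :: "real \<Rightarrow> real \<Rightarrow> real" where
  "Delta_s Ls Lc = Sup {l. \<exists>rc rs. rc > 0 \<and> rs \<ge> 0 \<and>
      ((\<lambda>\<rho>. - ln (ED_s Lc Ls \<rho> (rs / 2 * log 2 \<rho>) (rc / 2 * log 2 \<rho>)) / ln \<rho>)
        \<longlongrightarrow> l) at_top}"

end

theory Submission
  imports Defs
begin

text \<open>
  With rates \<open>R\<^sub>s = r\<^sub>s/2 log\<^sub>2 \<rho>\<close>, \<open>R\<^sub>c = r\<^sub>c/2 log\<^sub>2 \<rho>\<close>, the expected distortion is an integral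
  of an explicit loss \<open>sscc_loss \<rho> r\<^sub>s r\<^sub>c H\<^sub>0 \<Gamma>\<^sub>0\<close> of the normalised gains.  Its decay
  exponent is squeezed between two kinds of bounds:
  \<^item> lower bounds on the distortion come from deep-fade events \<open>H\<^sub>0 \<le> \<rho>\<^sup>-\<^sup>\<alpha>\<close>,
    \<open>\<Gamma>\<^sub>0 \<le> \<rho>\<^sup>-\<^sup>\<beta>\<close>, whose probability is of order \<open>\<rho>\<^sup>-\<^sup>\<alpha>\<^sup>L\<^sup>c\<^sup>-\<^sup>\<beta>\<^sup>L\<^sup>s\<close> (small-ball estimate for
    the Gamma law);
  \<^item> upper bounds come from dominating the loss pointwise by products of negative powers
    \<open>H\<^sub>0\<^sup>-\<^sup>a \<Gamma>\<^sub>0\<^sup>-\<^sup>b\<close>, whose expectations (negative Gamma moments) are finite for \<open>a < L\<^sub>c\<close>,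
    \<open>b < L\<^sub>s\<close>.  Finally the
  rate exponents are optimised separately for \<open>L\<^sub>s \<le> 1\<close> (no source bits, one balancing
  channel rate) and \<open>L\<^sub>s > 1\<close> (explicit optimal pair); in both cases the optimum is attained,
  so the supremum defining \<open>Delta_s\<close> is a maximum.
\<close>

section \<open>The Gamma law with shape L and scale 1/L\<close>

definition gamma_const :: "real \<Rightarrow> real" where
  "gamma_const L = L powr L / Gamma L"

lemma gamma_const_pos: "L > 0 \<Longrightarrow> gamma_const L > 0"
  unfolding gamma_const_def using Gamma_real_pos by auto

lemma gamma_density_eq:
  assumes "L > 0"
  shows "gamma_density L (1/L) x =
    (if 0 < x then gamma_const L * x powr (L - 1) * exp (- (L * x)) else 0)"
  using assms unfolding gamma_density_def gamma_const_def
  by (auto simp: powr_divide field_simps)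

lemma gamma_density_measurable [measurable]:
  "(\<lambda>x. gamma_density L \<theta> x) \<in> borel_measurable borel"
  unfolding gamma_density_def by measurable

lemma sets_gamma_dist [simp]: "sets (gamma_dist L \<theta>) = sets borel"
  unfolding gamma_dist_def by simp

lemma space_gamma_dist [simp]: "space (gamma_dist L \<theta>) = UNIV"
  unfolding gamma_dist_def by simp

lemma measurable_gamma_dist:
  "g \<in> borel_measurable borel \<Longrightarrow> g \<in> borel_measurable (gamma_dist L \<theta>)"
  by (simp add: measurable_cong_sets[OF sets_gamma_dist refl])

lemma nn_integral_gamma_kernel:
  assumes s: "s > 0" and L: "L > 0"
  shows "(\<integral>\<^sup>+x. ennreal (indicator {0..} x * x powr (s - 1) * exp (- (L * x))) \<partial>lborel)
    = ennreal (Gamma s / L powr s)"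
proof -
  define k where "k x = ennreal (indicator {0..} x * x powr (s - 1) * exp (- (L * x)))" for x :: real
  define f where "f t = ennreal (indicator {0..} t * t powr (s - 1) / exp t)" for t :: real
  have [measurable]: "f \<in> borel_measurable borel" "k \<in> borel_measurable borel"
    unfolding f_def k_def by measurable
  have scale: "f (0 + L * x) = ennreal (L powr (s - 1)) * k x" for x
    using L unfolding f_def k_def
    by (cases "x \<ge> 0")
       (auto simp: indicator_def powr_mult exp_minus field_simps ennreal_mult'[symmetric] zero_le_mult_iff)
  have "ennreal (Gamma s) = (\<integral>\<^sup>+x. f x \<partial>lborel)"
    unfolding f_def using Gamma_conv_nn_integral_real[OF s] by simp
  also have "\<dots> = ennreal L * (\<integral>\<^sup>+x. f (0 + L * x) \<partial>lborel)"
    using nn_integral_real_affine[of f L 0] L by simp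
  also have "\<dots> = ennreal L * (ennreal (L powr (s - 1)) * (\<integral>\<^sup>+x. k x \<partial>lborel))"
    unfolding scale by (subst nn_integral_cmult) auto
  also have "\<dots> = ennreal (L powr s) * (\<integral>\<^sup>+x. k x \<partial>lborel)"
  proof -
    have "ennreal L * ennreal (L powr (s - 1)) = ennreal (L powr s)"
      using L by (simp add: ennreal_mult'[symmetric] powr_diff)
    then show ?thesis by (simp add: mult.assoc[symmetric])
  qed
  finally have "ennreal (Gamma s) = ennreal (L powr s) * (\<integral>\<^sup>+x. k x \<partial>lborel)" .
  moreover have "ennreal (1 / L powr s) * ennreal (L powr s) = 1"
    using L by (simp add: ennreal_mult'[symmetric])
  ultimately have "(\<integral>\<^sup>+x. k x \<partial>lborel) = ennreal (1 / L powr s) * ennreal (Gamma s)"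
    by (simp add: mult.assoc[symmetric])
  then show ?thesis
    using L Gamma_real_pos[OF s] unfolding k_def by (simp add: ennreal_mult'[symmetric])
qed

lemma gamma_density_ennreal:
  assumes "L > 0"
  shows "ennreal (gamma_density L (1/L) x) =
    ennreal (gamma_const L) * ennreal (indicator {0..} x * x powr (L - 1) * exp (- (L * x)))"
  using assms gamma_const_pos[OF assms]
  by (cases "x > 0") (auto simp: gamma_density_eq ennreal_mult'[symmetric] indicator_def)

lemma gamma_dist_total:
  assumes "L > 0"
  shows "emeasure (gamma_dist L (1/L)) UNIV = 1"
proof -
  have "emeasure (gamma_dist L (1/L)) UNIV = (\<integral>\<^sup>+x. ennreal (gamma_density L (1/L) x) \<partial>lborel)"
    unfolding gamma_dist_def by (simp add: emeasure_density)
  also have "\<dots> = ennreal (gamma_const L) * ennreal (Gamma L / L powr L)"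
    using assms unfolding gamma_density_ennreal[OF assms]
    by (subst nn_integral_cmult) (auto simp: nn_integral_gamma_kernel)
  also have "\<dots> = 1"
  proof -
    have "Gamma L \<noteq> 0" using Gamma_real_pos[OF assms] by simp
    then show ?thesis
      using assms gamma_const_pos[OF assms] by (simp add: ennreal_mult'[symmetric] gamma_const_def)
  qed
  finally show ?thesis .
qed

lemma sigma_finite_gamma_dist: "L > 0 \<Longrightarrow> sigma_finite_measure (gamma_dist L (1/L))"
  using gamma_dist_total
  by (intro finite_measure.axioms(1) finite_measureI) simp

lemma nn_integral_gamma_dist:
  assumes "g \<in> borel_measurable borel"
  shows "(\<integral>\<^sup>+x. g x \<partial>gamma_dist L (1/L)) =
     (\<integral>\<^sup>+x. ennreal (gamma_density L (1/L) x) * g x \<partial>lborel)"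
  unfolding gamma_dist_def using assms by (subst nn_integral_density) auto

lemma AE_gamma_dist_pos: "L > 0 \<Longrightarrow> AE x in gamma_dist L (1/L). 0 < x"
  unfolding gamma_dist_def by (subst AE_density) (auto simp: gamma_density_eq)

text \<open>The truncated negative power \<open>x\<^sup>-\<^sup>a\<close> (set to 0 for \<open>x \<le> 0\<close>, a null set for every law
  used here) and its expectation under Gamma(L, 1/L), which is finite exactly for \<open>a < L\<close>.\<close>
definition neg_pow :: "real \<Rightarrow> real \<Rightarrow> real" where
  "neg_pow a x = (if 0 < x then x powr (- a) else 0)"

definition neg_moment :: "real \<Rightarrow> real \<Rightarrow> real" where
  "neg_moment L a = gamma_const L * (Gamma (L - a) / L powr (L - a))"

lemma neg_pow_measurable [measurable]: "neg_pow a \<in> borel_measurable borel"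
  unfolding neg_pow_def by measurable

lemma neg_pow_nonneg: "neg_pow a x \<ge> 0"
  unfolding neg_pow_def by simp

lemma neg_pow_zero: "0 < x \<Longrightarrow> neg_pow 0 x = 1"
  unfolding neg_pow_def by simp

lemma neg_pow_add: "neg_pow a x * neg_pow b x = neg_pow (a + b) x"
  unfolding neg_pow_def by (auto simp: powr_add[symmetric] algebra_simps)

lemma neg_moment_pos: "L > 0 \<Longrightarrow> a < L \<Longrightarrow> neg_moment L a > 0"
  unfolding neg_moment_def using gamma_const_pos Gamma_real_pos[of "L - a"] by simp

lemma neg_moment_zero:
  assumes "L > 0" shows "neg_moment L 0 = 1"
proof -
  have "Gamma L \<noteq> 0" using Gamma_real_pos[OF assms] by simp
  then show ?thesis unfolding neg_moment_def gamma_const_def using assms by simp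
qed

lemma gamma_neg_moment:
  assumes L: "L > 0" and a: "a < L"
  shows "(\<integral>\<^sup>+x. ennreal (neg_pow a x) \<partial>gamma_dist L (1/L)) = ennreal (neg_moment L a)"
proof -
  have "(\<integral>\<^sup>+x. ennreal (neg_pow a x) \<partial>gamma_dist L (1/L)) =
        (\<integral>\<^sup>+x. ennreal (gamma_density L (1/L) x) * ennreal (neg_pow a x) \<partial>lborel)"
    by (simp add: nn_integral_gamma_dist)
  also have "\<dots> = (\<integral>\<^sup>+x. ennreal (gamma_const L) *
           ennreal (indicator {0..} x * x powr ((L - a) - 1) * exp (- (L * x))) \<partial>lborel)"
  proof (rule nn_integral_cong)
    fix x :: real
    show "ennreal (gamma_density L (1/L) x) * ennreal (neg_pow a x) =
        ennreal (gamma_const L) * ennreal (indicator {0..} x * x powr ((L - a) - 1) * exp (- (L * x)))"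
      using L gamma_const_pos[OF L]
      by (cases "x > 0")
         (auto simp: gamma_density_eq neg_pow_def ennreal_mult'[symmetric] indicator_def
                     powr_add[symmetric] algebra_simps)
  qed
  also have "\<dots> = ennreal (gamma_const L) * ennreal (Gamma (L - a) / L powr (L - a))"
    using a by (subst nn_integral_cmult) (auto simp: nn_integral_gamma_kernel L)
  finally show ?thesis
    using gamma_const_pos[OF L] unfolding neg_moment_def by (simp add: ennreal_mult'[symmetric])
qed

text \<open>Small-ball estimate \<open>P(X \<le> b) \<ge> c\<^sub>L b\<^sup>L\<close> for \<open>0 < b \<le> 1\<close>: this is what makes
  deep fades of a Gamma(L, 1/L) gain occur with probability of order \<open>b\<^sup>L\<close>.\<close>
definition small_ball_const :: "real \<Rightarrow> real" where
  "small_ball_const L = gamma_const L * exp (- L) / L"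

lemma small_ball_const_pos: "L > 0 \<Longrightarrow> small_ball_const L > 0"
  unfolding small_ball_const_def using gamma_const_pos by simp

lemma gamma_small_ball:
  assumes L: "L > 0" and b: "0 < b" "b \<le> 1"
  shows "ennreal (small_ball_const L * b powr L) \<le>
    (\<integral>\<^sup>+x. ennreal (indicator {..b} x) \<partial>gamma_dist L (1/L))"
proof -
  let ?c = "gamma_const L * exp (- L)"
  have "((\<lambda>x. x powr (L - 1)) has_integral (b powr (L - 1 + 1) / (L - 1 + 1))) {0..b}"
    using has_integral_powr_from_0[of "L - 1" b] L b by simp
  from nn_integral_has_integral_lebesgue[OF _ this]
  have I: "(\<integral>\<^sup>+x. ennreal (indicator {0..b} x * x powr (L - 1)) \<partial>lborel) = ennreal (b powr L / L)"
    by simp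
  have "ennreal (small_ball_const L * b powr L) = ennreal ?c * ennreal (b powr L / L)"
    using L gamma_const_pos[OF L] unfolding small_ball_const_def by (simp add: ennreal_mult'[symmetric])
  also have "\<dots> = (\<integral>\<^sup>+x. ennreal ?c * ennreal (indicator {0..b} x * x powr (L - 1)) \<partial>lborel)"
    by (subst nn_integral_cmult) (auto simp: I)
  also have "\<dots> \<le> (\<integral>\<^sup>+x. ennreal (gamma_density L (1/L) x) * ennreal (indicator {..b} x) \<partial>lborel)"
  proof (rule nn_integral_mono)
    fix x :: real
    show "ennreal ?c * ennreal (indicator {0..b} x * x powr (L - 1)) \<le>
        ennreal (gamma_density L (1/L) x) * ennreal (indicator {..b} x)"
    proof (cases "0 < x \<and> x \<le> b")
      case True
      have "exp (- L) \<le> exp (- (L * x))" using True b L by (simp add: mult_left_le)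
      then have "exp (- L) * x powr (L - 1) \<le> exp (- (L * x)) * x powr (L - 1)"
        by (rule mult_right_mono) simp
      then have "?c * x powr (L - 1) \<le> gamma_const L * x powr (L - 1) * exp (- (L * x))"
        using gamma_const_pos[OF L] by (simp add: mult_left_mono mult_ac)
      then show ?thesis using True L gamma_const_pos[OF L]
        by (auto simp: gamma_density_eq ennreal_mult'[symmetric] indicator_def intro!: ennreal_leI)
    qed (auto simp: indicator_def)
  qed
  also have "\<dots> = (\<integral>\<^sup>+x. ennreal (indicator {..b} x) \<partial>gamma_dist L (1/L))"
    by (simp add: nn_integral_gamma_dist)
  finally show ?thesis .
qed

section \<open>The Nakagami law of the normalised gains\<close>

lemma sets_nakagami_law [simp]: "sets (nakagami_law Lc Ls) = sets (borel \<Otimes>\<^sub>M borel)"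
  unfolding nakagami_law_def by (rule sets_pair_measure_cong) simp_all

lemma space_nakagami_law [simp]: "space (nakagami_law Lc Ls) = UNIV"
  unfolding nakagami_law_def by (simp add: space_pair_measure)

lemma measurable_nakagami_law:
  "f \<in> borel_measurable (borel \<Otimes>\<^sub>M borel) \<Longrightarrow> f \<in> borel_measurable (nakagami_law Lc Ls)"
  by (simp add: measurable_cong_sets[OF sets_nakagami_law refl])

lemma nakagami_nn_integral_prod:
  assumes Lc: "Lc > 0" and Ls: "Ls > 0"
    and [measurable]: "g \<in> borel_measurable borel" "h \<in> borel_measurable borel"
  shows "(\<integral>\<^sup>+p. g (fst p) * h (snd p) \<partial>nakagami_law Lc Ls) =
     (\<integral>\<^sup>+x. g x \<partial>gamma_dist Lc (1/Lc)) * (\<integral>\<^sup>+y. h y \<partial>gamma_dist Ls (1/Ls))"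
proof -
  interpret S: sigma_finite_measure "gamma_dist Ls (1/Ls)"
    using sigma_finite_gamma_dist[OF Ls] .
  have [measurable]: "(\<lambda>p. g (fst p) * h (snd p)) \<in>
      borel_measurable (gamma_dist Lc (1/Lc) \<Otimes>\<^sub>M gamma_dist Ls (1/Ls))"
    using measurable_nakagami_law[of "\<lambda>p. g (fst p) * h (snd p)"]
    unfolding nakagami_law_def by simp
  have "(\<integral>\<^sup>+p. g (fst p) * h (snd p) \<partial>nakagami_law Lc Ls) =
     (\<integral>\<^sup>+x. \<integral>\<^sup>+y. g x * h y \<partial>gamma_dist Ls (1/Ls) \<partial>gamma_dist Lc (1/Lc))"
    unfolding nakagami_law_def by (subst S.nn_integral_fst[symmetric]) auto
  also have "\<dots> = (\<integral>\<^sup>+x. g x * (\<integral>\<^sup>+y. h y \<partial>gamma_dist Ls (1/Ls)) \<partial>gamma_dist Lc (1/Lc))"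
    by (intro nn_integral_cong nn_integral_cmult measurable_gamma_dist) simp
  also have "\<dots> = (\<integral>\<^sup>+x. g x \<partial>gamma_dist Lc (1/Lc)) * (\<integral>\<^sup>+y. h y \<partial>gamma_dist Ls (1/Ls))"
    by (intro nn_integral_multc measurable_gamma_dist) simp
  finally show ?thesis .
qed

lemma nakagami_total: "Lc > 0 \<Longrightarrow> Ls > 0 \<Longrightarrow> (\<integral>\<^sup>+p. 1 \<partial>nakagami_law Lc Ls) = 1"
  using nakagami_nn_integral_prod[of Lc Ls "\<lambda>_. 1" "\<lambda>_. 1"] gamma_dist_total
  by simp

lemma AE_nakagami_pos:
  assumes Lc: "Lc > 0" and Ls: "Ls > 0"
  shows "AE p in nakagami_law Lc Ls. 0 < fst p \<and> 0 < snd p"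
proof -
  interpret P: pair_sigma_finite "gamma_dist Lc (1/Lc)" "gamma_dist Ls (1/Ls)"
    unfolding pair_sigma_finite_def using sigma_finite_gamma_dist Lc Ls by blast
  have "{p \<in> space (borel \<Otimes>\<^sub>M borel). 0 < fst (p :: real \<times> real) \<and> 0 < snd p} \<in> sets (borel \<Otimes>\<^sub>M borel)"
    by measurable
  then show ?thesis
    unfolding nakagami_law_def
    using AE_gamma_dist_pos[OF Lc] AE_gamma_dist_pos[OF Ls]
    by (intro P.AE_pair_measure)
       (auto simp: space_pair_measure sets_pair_measure_cong[OF sets_gamma_dist sets_gamma_dist]
             elim!: AE_mp)
qed

lemma nakagami_neg_moment:
  assumes Lc: "Lc > 0" and Ls: "Ls > 0" and A: "A \<ge> 0" and a: "a < Lc" and b: "b < Ls"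
  shows "(\<integral>\<^sup>+p. ennreal (A * neg_pow a (fst p) * neg_pow b (snd p)) \<partial>nakagami_law Lc Ls) =
    ennreal (A * neg_moment Lc a * neg_moment Ls b)"
proof -
  have "(\<integral>\<^sup>+p. ennreal (A * neg_pow a (fst p) * neg_pow b (snd p)) \<partial>nakagami_law Lc Ls) =
      (\<integral>\<^sup>+p. ennreal (A * neg_pow a (fst p)) * ennreal (neg_pow b (snd p)) \<partial>nakagami_law Lc Ls)"
    using A by (intro nn_integral_cong) (simp add: ennreal_mult' neg_pow_nonneg)
  also have "\<dots> = ennreal A * (\<integral>\<^sup>+x. ennreal (neg_pow a x) \<partial>gamma_dist Lc (1/Lc)) *
      (\<integral>\<^sup>+y. ennreal (neg_pow b y) \<partial>gamma_dist Ls (1/Ls))"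
  proof -
    have "(\<integral>\<^sup>+x. ennreal A * ennreal (neg_pow a x) \<partial>gamma_dist Lc (1/Lc)) =
        ennreal A * (\<integral>\<^sup>+x. ennreal (neg_pow a x) \<partial>gamma_dist Lc (1/Lc))"
      by (rule nn_integral_cmult) (simp add: measurable_gamma_dist)
    then show ?thesis
      using A by (subst nakagami_nn_integral_prod[OF Lc Ls]) (auto simp: ennreal_mult')
  qed
  finally show ?thesis
    using A neg_moment_pos[OF Lc a] neg_moment_pos[OF Ls b]
    by (simp add: gamma_neg_moment Lc Ls a b ennreal_mult)
qed

lemma nakagami_small_ball:
  assumes Lc: "Lc > 0" and Ls: "Ls > 0" and c: "c \<ge> 0"
    and a: "0 < a" "a \<le> 1" and b: "0 < b" "b \<le> 1"
  shows "ennreal (c * (small_ball_const Lc * a powr Lc) * (small_ball_const Ls * b powr Ls)) \<le>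
     (\<integral>\<^sup>+p. ennreal (c * indicator {..a} (fst p) * indicator {..b} (snd p)) \<partial>nakagami_law Lc Ls)"
proof -
  have "ennreal (c * (small_ball_const Lc * a powr Lc) * (small_ball_const Ls * b powr Ls)) =
      ennreal c * ennreal (small_ball_const Lc * a powr Lc) * ennreal (small_ball_const Ls * b powr Ls)"
    using c small_ball_const_pos[OF Lc] small_ball_const_pos[OF Ls] by (simp add: ennreal_mult')
  also have "\<dots> \<le> ennreal c * (\<integral>\<^sup>+x. ennreal (indicator {..a} x) \<partial>gamma_dist Lc (1/Lc)) *
      (\<integral>\<^sup>+y. ennreal (indicator {..b} y) \<partial>gamma_dist Ls (1/Ls))"
    by (intro mult_mono gamma_small_ball Lc Ls a b) auto
  also have "\<dots> = (\<integral>\<^sup>+p. ennreal (c * indicator {..a} (fst p)) * ennreal (indicator {..b} (snd p))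
      \<partial>nakagami_law Lc Ls)"
  proof -
    have "(\<integral>\<^sup>+x. ennreal c * ennreal (indicator {..a} x) \<partial>gamma_dist Lc (1/Lc)) =
        ennreal c * (\<integral>\<^sup>+x. ennreal (indicator {..a} x) \<partial>gamma_dist Lc (1/Lc))"
      by (rule nn_integral_cmult) (simp add: measurable_gamma_dist)
    then show ?thesis
      using c by (subst nakagami_nn_integral_prod[OF Lc Ls]) (auto simp: ennreal_mult')
  qed
  also have "\<dots> = (\<integral>\<^sup>+p. ennreal (c * indicator {..a} (fst p) * indicator {..b} (snd p)) \<partial>nakagami_law Lc Ls)"
    using c by (intro nn_integral_cong) (simp add: ennreal_mult')
  finally show ?thesis .
qed

section \<open>The expected distortion in terms of rate exponents\<close>

definition ED_scaled :: "real \<Rightarrow> real \<Rightarrow> real \<Rightarrow> real \<Rightarrow> real \<Rightarrow> real" where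
  "ED_scaled Lc Ls rs rc \<rho> = ED_s Lc Ls \<rho> (rs / 2 * log 2 \<rho>) (rc / 2 * log 2 \<rho>)"

text \<open>The distortion for normalised gains \<open>x = H\<^sub>0\<close>, \<open>y = \<Gamma>\<^sub>0\<close>: in outage (the channel
  cannot carry \<open>\<rho>\<^sup>r\<^sup>c\<close>, or the side information already makes the message useless) only
  the side information helps; otherwise the decoder also gets the source description.\<close>
definition sscc_loss :: "real \<Rightarrow> real \<Rightarrow> real \<Rightarrow> real \<Rightarrow> real \<Rightarrow> real" where
  "sscc_loss \<rho> rs rc x y =
    (if 1 + \<rho> * x \<le> \<rho> powr rc \<or> \<rho> powr rc \<le> 1 + (\<rho> powr (rs + rc) - 1) / (1 + \<rho> * y)
     then 1 / (\<rho> * y + 1) else 1 / (\<rho> * y + \<rho> powr (rs + rc)))"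

lemma sscc_loss_bounds:
  assumes \<rho>: "\<rho> > 1" and s: "rs + rc \<ge> 0" and y: "y > 0"
  shows "0 \<le> sscc_loss \<rho> rs rc x y" "sscc_loss \<rho> rs rc x y \<le> 1"
    "1 / (\<rho> * y + \<rho> powr (rs + rc)) \<le> sscc_loss \<rho> rs rc x y"
proof -
  have "\<rho> powr (rs + rc) \<ge> 1" using \<rho> s by (simp add: ge_one_powr_ge_zero)
  moreover have "0 < \<rho> * y" using \<rho> y by simp
  ultimately show "0 \<le> sscc_loss \<rho> rs rc x y" "sscc_loss \<rho> rs rc x y \<le> 1"
      "1 / (\<rho> * y + \<rho> powr (rs + rc)) \<le> sscc_loss \<rho> rs rc x y"
    unfolding sscc_loss_def by (auto intro!: divide_left_mono)
qed

lemma scaled_rate_eq_log: "\<rho> > 0 \<Longrightarrow> c / 2 * log 2 \<rho> = 1 / 2 * log 2 (\<rho> powr c)"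
  by (simp add: log_powr)

lemma ED_s_integrand_alt:
  "(let h = \<rho> * x; \<gamma> = \<rho> * y in
      D_d (Rs + Rc) \<gamma> * indicator (- outage_s Rs Rc) (h, \<gamma>)
    + D_d 0 \<gamma> * indicator (outage_s Rs Rc) (h, \<gamma>)) =
   (if Rc \<ge> 1 / 2 * log 2 (1 + \<rho> * x) \<or>
       Rc \<le> 1 / 2 * log 2 (1 + (2 powr (2 * (Rs + Rc)) - 1) / (1 + \<rho> * y))
    then 1 / (\<rho> * y + 2 powr (2 * 0)) else 1 / (\<rho> * y + 2 powr (2 * (Rs + Rc))))"
  unfolding D_d_def outage_s_def Let_def indicator_def by auto

lemma ED_s_integrand_eq:
  fixes rs rc :: real
  assumes \<rho>: "\<rho> > 1" and x: "x > 0" and y: "y > 0"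
  defines "Rs \<equiv> rs / 2 * log 2 \<rho>" and "Rc \<equiv> rc / 2 * log 2 \<rho>"
  shows "(let h = \<rho> * x; \<gamma> = \<rho> * y in
           D_d (Rs + Rc) \<gamma> * indicator (- outage_s Rs Rc) (h, \<gamma>)
         + D_d 0 \<gamma> * indicator (outage_s Rs Rc) (h, \<gamma>)) = sscc_loss \<rho> rs rc x y"
proof -
  have sum: "2 powr (2 * (Rs + Rc)) = \<rho> powr (rs + rc)"
  proof -
    have "2 * (Rs + Rc) = log 2 \<rho> * (rs + rc)"
      unfolding Rs_def Rc_def by (simp add: algebra_simps)
    then show ?thesis using \<rho> by (simp add: powr_powr[symmetric])
  qed
  have z: "0 < 1 + (\<rho> powr (rs + rc) - 1) / (1 + \<rho> * y)"
  proof -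
    have "1 + (\<rho> powr (rs + rc) - 1) / (1 + \<rho> * y) = (\<rho> * y + \<rho> powr (rs + rc)) / (1 + \<rho> * y)"
    proof -
      have "0 < 1 + \<rho> * y" using \<rho> y by (simp add: add_pos_pos)
      then show ?thesis by (simp add: field_simps)
    qed
    then show ?thesis using \<rho> y by (simp add: add_pos_pos)
  qed
  have Rc: "Rc = 1 / 2 * log 2 (\<rho> powr rc)"
    unfolding Rc_def using \<rho> by (rule scaled_rate_eq_log[OF order.strict_trans[OF zero_less_one]])
  have "0 < 1 + \<rho> * x" using \<rho> x by (simp add: add_pos_pos)
  then have channel: "(Rc \<ge> 1 / 2 * log 2 (1 + \<rho> * x)) \<longleftrightarrow> 1 + \<rho> * x \<le> \<rho> powr rc"
    using \<rho> unfolding Rc by simp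
  have side: "(Rc \<le> 1 / 2 * log 2 (1 + (\<rho> powr (rs + rc) - 1) / (1 + \<rho> * y))) \<longleftrightarrow>
      \<rho> powr rc \<le> 1 + (\<rho> powr (rs + rc) - 1) / (1 + \<rho> * y)"
    using \<rho> z by (subst Rc) simp
  show ?thesis
    unfolding ED_s_integrand_alt sum channel side sscc_loss_def by simp
qed

text \<open>Since the gains are positive almost surely, the expected distortion is the integral of
  \<open>sscc_loss\<close> over the Nakagami law.\<close>
lemma ED_scaled_eq:
  assumes Lc: "Lc > 0" and Ls: "Ls > 0" and \<rho>: "\<rho> > 1" and s: "rs + rc \<ge> 0"
  shows "ED_scaled Lc Ls rs rc \<rho> =
    enn2real (\<integral>\<^sup>+p. ennreal (sscc_loss \<rho> rs rc (fst p) (snd p)) \<partial>nakagami_law Lc Ls)"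
proof -
  define Rs Rc where "Rs = rs / 2 * log 2 \<rho>" and "Rc = rc / 2 * log 2 \<rho>"
  define F where "F p = (let h = \<rho> * fst p; \<gamma> = \<rho> * snd p in
      D_d (Rs + Rc) \<gamma> * indicator (- outage_s Rs Rc) (h, \<gamma>)
    + D_d 0 \<gamma> * indicator (outage_s Rs Rc) (h, \<gamma>))" for p :: "real \<times> real"
  have F: "AE p in nakagami_law Lc Ls. F p = sscc_loss \<rho> rs rc (fst p) (snd p)"
    using AE_nakagami_pos[OF Lc Ls]
  proof eventually_elim
    case (elim p)
    then show ?case
      using ED_s_integrand_eq[OF \<rho>, of "fst p" "snd p" rs rc] unfolding F_def Rs_def Rc_def by simp
  qed
  have meas: "F \<in> borel_measurable (nakagami_law Lc Ls)"
    unfolding F_def[abs_def] ED_s_integrand_alt by (intro measurable_nakagami_law) measurable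
  have nonneg: "AE p in nakagami_law Lc Ls. 0 \<le> F p"
    using F AE_nakagami_pos[OF Lc Ls]
    by eventually_elim (simp add: sscc_loss_bounds(1)[OF \<rho> s])
  have "ED_scaled Lc Ls rs rc \<rho> = (\<integral>p. F p \<partial>nakagami_law Lc Ls)"
    unfolding ED_scaled_def ED_s_def F_def Rs_def Rc_def ..
  also have "\<dots> = enn2real (\<integral>\<^sup>+p. ennreal (F p) \<partial>nakagami_law Lc Ls)"
    by (rule integral_eq_nn_integral[OF meas nonneg])
  also have "(\<integral>\<^sup>+p. ennreal (F p) \<partial>nakagami_law Lc Ls) =
      (\<integral>\<^sup>+p. ennreal (sscc_loss \<rho> rs rc (fst p) (snd p)) \<partial>nakagami_law Lc Ls)"
  proof (rule nn_integral_cong_AE)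
    show "AE p in nakagami_law Lc Ls. ennreal (F p) = ennreal (sscc_loss \<rho> rs rc (fst p) (snd p))"
      by (rule eventually_mono[OF F]) simp
  qed
  finally show ?thesis .
qed

lemma ED_scaled_lower:
  assumes Lc: "Lc > 0" and Ls: "Ls > 0" and \<rho>: "\<rho> > 1" and s: "rs + rc \<ge> 0"
    and f: "\<And>x y. 0 < x \<Longrightarrow> 0 < y \<Longrightarrow> f x y \<le> sscc_loss \<rho> rs rc x y"
    and v: "v \<ge> 0" "ennreal v \<le> (\<integral>\<^sup>+p. ennreal (f (fst p) (snd p)) \<partial>nakagami_law Lc Ls)"
  shows "v \<le> ED_scaled Lc Ls rs rc \<rho>"
proof -
  let ?I = "\<integral>\<^sup>+p. ennreal (sscc_loss \<rho> rs rc (fst p) (snd p)) \<partial>nakagami_law Lc Ls"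
  have "(\<integral>\<^sup>+p. ennreal (f (fst p) (snd p)) \<partial>nakagami_law Lc Ls) \<le> ?I"
    by (intro nn_integral_mono_AE eventually_mono[OF AE_nakagami_pos[OF Lc Ls]])
       (auto intro!: ennreal_leI f)
  with v(2) have "ennreal v \<le> ?I" by (rule order_trans)
  moreover have "?I \<le> (\<integral>\<^sup>+p. 1 \<partial>nakagami_law Lc Ls)"
    by (intro nn_integral_mono_AE eventually_mono[OF AE_nakagami_pos[OF Lc Ls]])
       (simp add: sscc_loss_bounds(2)[OF \<rho> s])
  ultimately have "enn2real (ennreal v) \<le> enn2real ?I"
    using nakagami_total[OF Lc Ls] ennreal_one_less_top
    by (intro enn2real_mono) (auto intro: le_less_trans)
  then show ?thesis
    using v(1) ED_scaled_eq[OF Lc Ls \<rho> s] by simp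
qed

lemma ED_scaled_upper:
  assumes Lc: "Lc > 0" and Ls: "Ls > 0" and \<rho>: "\<rho> > 1" and s: "rs + rc \<ge> 0"
    and f: "\<And>x y. 0 < x \<Longrightarrow> 0 < y \<Longrightarrow> sscc_loss \<rho> rs rc x y \<le> f x y"
    and v: "v \<ge> 0" "(\<integral>\<^sup>+p. ennreal (f (fst p) (snd p)) \<partial>nakagami_law Lc Ls) \<le> ennreal v"
  shows "ED_scaled Lc Ls rs rc \<rho> \<le> v"
proof -
  have "(\<integral>\<^sup>+p. ennreal (sscc_loss \<rho> rs rc (fst p) (snd p)) \<partial>nakagami_law Lc Ls) \<le>
      (\<integral>\<^sup>+p. ennreal (f (fst p) (snd p)) \<partial>nakagami_law Lc Ls)"
    by (intro nn_integral_mono_AE eventually_mono[OF AE_nakagami_pos[OF Lc Ls]])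
       (auto intro!: ennreal_leI f)
  then have "(\<integral>\<^sup>+p. ennreal (sscc_loss \<rho> rs rc (fst p) (snd p)) \<partial>nakagami_law Lc Ls) \<le> ennreal v"
    using v(2) by (rule order_trans)
  then show ?thesis
    using v(1) ED_scaled_eq[OF Lc Ls \<rho> s] by (simp add: enn2real_leI)
qed

section \<open>Polynomial decay and its exponent\<close>

definition log_decay :: "(real \<Rightarrow> real) \<Rightarrow> real \<Rightarrow> real" where
  "log_decay f \<rho> = - ln (f \<rho>) / ln \<rho>"

definition power_lower_bound :: "(real \<Rightarrow> real) \<Rightarrow> real \<Rightarrow> bool" where
  "power_lower_bound f e \<longleftrightarrow> (\<exists>C>0. eventually (\<lambda>\<rho>. C * \<rho> powr (- e) \<le> f \<rho>) at_top)"

definition power_upper_bound :: "(real \<Rightarrow> real) \<Rightarrow> real \<Rightarrow> bool" where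
  "power_upper_bound f e \<longleftrightarrow> (\<exists>C>0. eventually (\<lambda>\<rho>. f \<rho> \<le> C * \<rho> powr (- e)) at_top)"

text \<open>Constant factors are invisible on the logarithmic scale.\<close>
lemma tendsto_const_over_ln: "((\<lambda>\<rho>::real. c / ln \<rho>) \<longlongrightarrow> 0) at_top"
  by (rule tendsto_divide_0[OF tendsto_const filterlim_at_top_imp_at_infinity[OF ln_at_top]])

lemma log_decay_le_of_lower_bound:
  assumes "C > 0" and "\<rho> > 1" and "C * \<rho> powr (- e) \<le> f \<rho>"
  shows "log_decay f \<rho> \<le> e - ln C / ln \<rho>" and "0 < f \<rho>"
proof -
  have p: "0 < C * \<rho> powr (- e)" using assms by simp
  then show pos: "0 < f \<rho>" using assms(3) by linarith
  have "ln (C * \<rho> powr (- e)) \<le> ln (f \<rho>)" using assms(3) p by simp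
  then have "ln C - e * ln \<rho> \<le> ln (f \<rho>)" using assms by (simp add: ln_mult ln_powr)
  moreover have "ln \<rho> > 0" using assms by simp
  ultimately show "log_decay f \<rho> \<le> e - ln C / ln \<rho>"
    unfolding log_decay_def by (simp add: field_simps)
qed

lemma log_decay_ge_of_upper_bound:
  assumes "C > 0" and "\<rho> > 1" and "0 < f \<rho>" and "f \<rho> \<le> C * \<rho> powr (- e)"
  shows "e - ln C / ln \<rho> \<le> log_decay f \<rho>"
proof -
  have "ln (f \<rho>) \<le> ln (C * \<rho> powr (- e))" using assms(3,4) by simp
  then have "ln (f \<rho>) \<le> ln C - e * ln \<rho>" using assms by (simp add: ln_mult ln_powr)
  moreover have "ln \<rho> > 0" using assms by simp
  ultimately have "(e * ln \<rho> - ln C) / ln \<rho> \<le> - ln (f \<rho>) / ln \<rho>"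
    by (intro divide_right_mono) auto
  moreover have "(e * ln \<rho> - ln C) / ln \<rho> = e - ln C / ln \<rho>"
    using \<open>ln \<rho> > 0\<close> by (simp add: field_simps)
  ultimately show ?thesis unfolding log_decay_def by simp
qed

lemma power_lower_bound_eventually:
  assumes "power_lower_bound f e" and "a > e"
  shows "eventually (\<lambda>\<rho>. log_decay f \<rho> < a \<and> 0 < f \<rho>) at_top"
proof -
  obtain C where C: "C > 0" and ev: "eventually (\<lambda>\<rho>. C * \<rho> powr (- e) \<le> f \<rho>) at_top"
    using assms(1) unfolding power_lower_bound_def by blast
  have "((\<lambda>\<rho>. e - ln C / ln \<rho>) \<longlongrightarrow> e - 0) at_top"
    by (intro tendsto_intros tendsto_const_over_ln)
  then have "eventually (\<lambda>\<rho>. e - ln C / ln \<rho> < a) at_top"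
    using assms(2) by (simp add: order_tendstoD(2))
  with ev eventually_gt_at_top[of 1] show ?thesis
  proof eventually_elim
    case (elim \<rho>)
    then show ?case using log_decay_le_of_lower_bound[where f = f, OF C elim(2,1)] by linarith
  qed
qed

lemma power_lower_bound_limit:
  assumes "power_lower_bound f e" and "(log_decay f \<longlongrightarrow> l) at_top"
  shows "l \<le> e"
proof (rule ccontr)
  assume "\<not> l \<le> e"
  then have "e < (l + e) / 2" "(l + e) / 2 < l" by simp_all
  have "eventually (\<lambda>\<rho>. log_decay f \<rho> < (l + e) / 2) at_top"
    by (rule eventually_mono[OF power_lower_bound_eventually[OF assms(1) \<open>e < (l + e) / 2\<close>]]) simp
  moreover have "eventually (\<lambda>\<rho>. (l + e) / 2 < log_decay f \<rho>) at_top"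
    by (rule order_tendstoD(1)[OF assms(2) \<open>(l + e) / 2 < l\<close>])
  ultimately have "eventually (\<lambda>_. False) (at_top :: real filter)"
    by eventually_elim simp
  then show False by simp
qed

lemma power_upper_bound_mono:
  assumes "power_upper_bound f e" and "e' \<le> e"
  shows "power_upper_bound f e'"
proof -
  obtain C where C: "C > 0" and ev: "eventually (\<lambda>\<rho>. f \<rho> \<le> C * \<rho> powr (- e)) at_top"
    using assms(1) unfolding power_upper_bound_def by blast
  have "eventually (\<lambda>\<rho>. f \<rho> \<le> C * \<rho> powr (- e')) at_top"
    using ev eventually_ge_at_top[of 1]
  proof eventually_elim
    case (elim \<rho>)
    have "\<rho> powr (- e) \<le> \<rho> powr (- e')" using elim assms(2) by (intro powr_mono) auto
    then show ?case using elim C by (smt (verit) mult_left_mono)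
  qed
  then show ?thesis unfolding power_upper_bound_def using C by blast
qed

lemma log_decay_tendsto:
  assumes D: "D > 0" and lower: "power_lower_bound f D"
    and upper: "\<And>t. 0 < t \<Longrightarrow> t < 1 \<Longrightarrow> power_upper_bound f (t * D)"
  shows "(log_decay f \<longlongrightarrow> D) at_top"
proof (rule order_tendstoI)
  fix a assume "a > D"
  then show "eventually (\<lambda>\<rho>. log_decay f \<rho> < a) at_top"
    by (rule eventually_mono[OF power_lower_bound_eventually[OF lower]]) simp
next
  fix a assume a: "a < D"
  define t where "t = max (1/2) ((a + D) / (2 * D))"
  have t: "0 < t" "t < 1" and at: "a < t * D"
  proof -
    show "0 < t" "t < 1" unfolding t_def using a D by (auto simp: field_simps)
    have "(a + D) / 2 = (a + D) / (2 * D) * D" using D by (simp add: field_simps)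
    also have "\<dots> \<le> t * D" unfolding t_def using D by (intro mult_right_mono) auto
    finally have "(a + D) / 2 \<le> t * D" .
    then show "a < t * D" using a by (simp add: field_simps)
  qed
  obtain C where C: "C > 0" and ev: "eventually (\<lambda>\<rho>. f \<rho> \<le> C * \<rho> powr (- (t * D))) at_top"
    using upper[OF t] unfolding power_upper_bound_def by blast
  have "((\<lambda>\<rho>. t * D - ln C / ln \<rho>) \<longlongrightarrow> t * D - 0) at_top"
    by (intro tendsto_intros tendsto_const_over_ln)
  then have "eventually (\<lambda>\<rho>. a < t * D - ln C / ln \<rho>) at_top"
    using at by (simp add: order_tendstoD(1))
  with ev power_lower_bound_eventually[OF lower less_add_one] eventually_gt_at_top[of 1]
  show "eventually (\<lambda>\<rho>. a < log_decay f \<rho>) at_top"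
  proof eventually_elim
    case (elim \<rho>)
    then have "t * D - ln C / ln \<rho> \<le> log_decay f \<rho>"
      by (intro log_decay_ge_of_upper_bound[OF C]) auto
    with elim show ?case by linarith
  qed
qed

section \<open>Lower bounds on the distortion: deep-fade events\<close>

lemma ED_scaled_event_lower:
  assumes Lc: "Lc > 0" and Ls: "Ls > 0" and \<rho>: "\<rho> > 1" and s: "rs + rc \<ge> 0" and c: "c \<ge> 0"
    and a: "0 < a" "a \<le> 1" and b: "0 < b" "b \<le> 1"
    and event: "\<And>x y. 0 < x \<Longrightarrow> x \<le> a \<Longrightarrow> 0 < y \<Longrightarrow> y \<le> b \<Longrightarrow> c \<le> sscc_loss \<rho> rs rc x y"
  shows "c * (small_ball_const Lc * a powr Lc) * (small_ball_const Ls * b powr Ls) \<le>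
    ED_scaled Lc Ls rs rc \<rho>"
proof (rule ED_scaled_lower[OF Lc Ls \<rho> s])
  fix x y :: real assume "0 < x" "0 < y"
  then show "c * indicator {..a} x * indicator {..b} y \<le> sscc_loss \<rho> rs rc x y"
    using event sscc_loss_bounds(1)[OF \<rho> s] by (auto simp: indicator_def)
next
  show "0 \<le> c * (small_ball_const Lc * a powr Lc) * (small_ball_const Ls * b powr Ls)"
    using c small_ball_const_pos[OF Lc] small_ball_const_pos[OF Ls] by simp
qed (rule nakagami_small_ball[OF Lc Ls c a b])

text \<open>The two ways of being in outage: the channel cannot carry rate \<open>r\<^sub>c\<close>, or the side
  information is already worth more than the source rate \<open>r\<^sub>s\<close>.\<close>
lemma sscc_loss_channel_outage:
  "1 + \<rho> * x \<le> \<rho> powr rc \<Longrightarrow> sscc_loss \<rho> rs rc x y = 1 / (\<rho> * y + 1)"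
  unfolding sscc_loss_def by simp

lemma sscc_loss_side_outage:
  assumes \<rho>: "\<rho> > 1" and rs: "rs \<ge> 0" and rc: "rc \<ge> 0" and y: "y > 0"
    and side: "1 + \<rho> * y \<le> \<rho> powr rs"
  shows "sscc_loss \<rho> rs rc x y = 1 / (\<rho> * y + 1)"
proof -
  define P Q where "P = \<rho> powr rs" and "Q = \<rho> powr rc"
  have P: "P \<ge> 1" and Q: "Q \<ge> 1"
    unfolding P_def Q_def using \<rho> rs rc by (simp_all add: ge_one_powr_ge_zero)
  have d: "1 + \<rho> * y > 0" using \<rho> y by (simp add: add_pos_pos)
  have "(P * Q - 1) / P \<le> (P * Q - 1) / (1 + \<rho> * y)"
    using P Q side d mult_mono[of 1 P 1 Q] unfolding P_def[symmetric]
    by (intro divide_left_mono) auto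
  moreover have "(P * Q - 1) / P = Q - 1 / P" using P by (simp add: field_simps)
  moreover have "1 / P \<le> 1" using P by simp
  ultimately have "\<rho> powr rc \<le> 1 + (\<rho> powr (rs + rc) - 1) / (1 + \<rho> * y)"
    unfolding P_def Q_def powr_add by linarith
  then show ?thesis unfolding sscc_loss_def by simp
qed

lemma powr_add_le_max:
  "(\<rho>::real) \<ge> 1 \<Longrightarrow> \<rho> powr u + \<rho> powr v \<le> 2 * \<rho> powr (max u v)"
  using powr_mono[of u "max u v" \<rho>] powr_mono[of v "max u v" \<rho>] by simp

lemma eventually_powr_ge_2:
  assumes "r > 0"
  shows "eventually (\<lambda>\<rho>::real. 2 \<le> \<rho> powr r) at_top"
  using eventually_ge_at_top[of "2 powr (1 / r)"]
proof eventually_elim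
  case (elim \<rho>)
  have "(2 powr (1 / r)) powr r \<le> \<rho> powr r" using elim assms by (intro powr_mono2) auto
  then show ?case using assms by (simp add: powr_powr)
qed

text \<open>Side-information gain of order \<open>\<rho>\<^sup>-\<^sup>\<beta>\<close>: even without outage the distortion is at
  least of order \<open>\<rho>\<^sup>-\<^sup>m\<^sup>a\<^sup>x\<^sup>(\<^sup>1\<^sup>-\<^sup>\<beta>\<^sup>,\<^sup>r\<^sup>s\<^sup>+\<^sup>r\<^sup>c\<^sup>)\<close>.\<close>
lemma ED_lower_full_rate:
  assumes Lc: "Lc > 0" and Ls: "Ls > 0" and s: "rs + rc \<ge> 0" and \<beta>: "\<beta> \<ge> 0"
  shows "power_lower_bound (ED_scaled Lc Ls rs rc) (\<beta> * Ls + max (1 - \<beta>) (rs + rc))"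
proof -
  define m where "m = max (1 - \<beta>) (rs + rc)"
  define C where "C = small_ball_const Lc * small_ball_const Ls / 2"
  have "eventually (\<lambda>\<rho>. C * \<rho> powr (- (\<beta> * Ls + m)) \<le> ED_scaled Lc Ls rs rc \<rho>) at_top"
    using eventually_gt_at_top[of 1]
  proof eventually_elim
    case (elim \<rho>)
    define b where "b = \<rho> powr (- \<beta>)"
    define c where "c = 1 / (\<rho> * b + \<rho> powr (rs + rc))"
    have b: "0 < b" "b \<le> 1" unfolding b_def using elim \<beta> powr_mono[of "- \<beta>" 0 \<rho>] by auto
    have "\<rho> * b + \<rho> powr (rs + rc) \<le> 2 * \<rho> powr m"
      using powr_add_le_max[of \<rho> "1 - \<beta>" "rs + rc"] elim
      unfolding b_def m_def by (simp add: powr_diff powr_minus_divide)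
    then have cm: "1 / (2 * \<rho> powr m) \<le> c"
      unfolding c_def using b elim by (intro divide_left_mono) (auto intro!: add_pos_pos mult_pos_pos)
    have "0 < 1 / (2 * \<rho> powr m)" using elim by simp
    with cm have c0: "0 \<le> c" by linarith
    have event: "c * (small_ball_const Lc * 1 powr Lc) * (small_ball_const Ls * b powr Ls) \<le>
        ED_scaled Lc Ls rs rc \<rho>"
    proof (rule ED_scaled_event_lower[OF Lc Ls elim s _ _ _ b])
      fix x y assume "0 < y" "y \<le> b"
      then have "c \<le> 1 / (\<rho> * y + \<rho> powr (rs + rc))"
        unfolding c_def using elim b by (intro divide_left_mono) (auto intro!: add_pos_pos mult_pos_pos)
      also have "\<dots> \<le> sscc_loss \<rho> rs rc x y" by (rule sscc_loss_bounds(3)[OF elim s \<open>0 < y\<close>])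
      finally show "c \<le> sscc_loss \<rho> rs rc x y" .
    qed (use c0 in auto)
    have "C * \<rho> powr (- (\<beta> * Ls + m)) = 1 / (2 * \<rho> powr m) * small_ball_const Lc *
        (small_ball_const Ls * b powr Ls)"
    proof -
      have "\<rho> powr (- (\<beta> * Ls + m)) = \<rho> powr (- \<beta> * Ls) / \<rho> powr m"
        by (simp add: powr_diff[symmetric])
      also have "\<rho> powr (- \<beta> * Ls) = b powr Ls" unfolding b_def by (simp add: powr_powr)
      finally show ?thesis unfolding C_def by simp
    qed
    also have "\<dots> \<le> c * small_ball_const Lc * (small_ball_const Ls * b powr Ls)"
      using small_ball_const_pos[OF Lc] small_ball_const_pos[OF Ls]
      by (intro mult_right_mono[OF mult_right_mono[OF cm]]) auto
    finally show ?case using event by simp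
  qed
  moreover have "C > 0"
    unfolding C_def using small_ball_const_pos[OF Lc] small_ball_const_pos[OF Ls] by simp
  ultimately show ?thesis unfolding power_lower_bound_def m_def by blast
qed

lemma below_rate_threshold:
  fixes \<rho> :: real
  assumes \<rho>: "\<rho> > 1" and r: "2 \<le> \<rho> powr r" and \<alpha>: "1 - \<alpha> \<le> r"
    and u: "0 \<le> u" "u \<le> \<rho> powr (- \<alpha>) / 2"
  shows "1 + \<rho> * u \<le> \<rho> powr r"
proof -
  have "\<rho> * u \<le> \<rho> * (\<rho> powr (- \<alpha>) / 2)" using u \<rho> by (intro mult_left_mono) auto
  also have "\<dots> = \<rho> powr (1 - \<alpha>) / 2" using \<rho> by (simp add: powr_diff powr_minus_divide)
  also have "\<dots> \<le> \<rho> powr r / 2" using \<rho> \<alpha> by (simp add: powr_mono)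
  finally show ?thesis using r by simp
qed

text \<open>An outage event \<open>{H\<^sub>0 \<le> a, \<Gamma>\<^sub>0 \<le> b}\<close> with \<open>b \<le> \<rho>\<^sup>-\<^sup>\<beta>\<close> leaves only the side
  information, whose distortion \<open>1/(\<rho> \<Gamma>\<^sub>0 + 1)\<close> is there of order \<open>\<rho>\<^sup>-\<^sup>m\<^sup>a\<^sup>x\<^sup>(\<^sup>1\<^sup>-\<^sup>\<beta>\<^sup>,\<^sup>0\<^sup>)\<close>.\<close>
lemma ED_outage_event_lower:
  fixes \<rho> :: real
  assumes Lc: "Lc > 0" and Ls: "Ls > 0" and \<rho>: "\<rho> > 1" and s: "rs + rc \<ge> 0"
    and a: "0 < a" "a \<le> 1" and b: "0 < b" "b \<le> 1" "b \<le> \<rho> powr (- \<beta>)"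
    and outage: "\<And>x y. 0 < x \<Longrightarrow> x \<le> a \<Longrightarrow> 0 < y \<Longrightarrow> y \<le> b \<Longrightarrow>
      sscc_loss \<rho> rs rc x y = 1 / (\<rho> * y + 1)"
  shows "1 / (2 * \<rho> powr (max (1 - \<beta>) 0)) * (small_ball_const Lc * a powr Lc) *
    (small_ball_const Ls * b powr Ls) \<le> ED_scaled Lc Ls rs rc \<rho>"
proof -
  define c where "c = 1 / (\<rho> * b + 1)"
  have "\<rho> * b + 1 \<le> \<rho> powr (1 - \<beta>) + \<rho> powr 0"
    using \<rho> b mult_left_mono[OF b(3), of \<rho>] by (simp add: powr_diff powr_minus_divide)
  also have "\<dots> \<le> 2 * \<rho> powr (max (1 - \<beta>) 0)" using \<rho> by (intro powr_add_le_max) simp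
  finally have cm: "1 / (2 * \<rho> powr (max (1 - \<beta>) 0)) \<le> c"
    unfolding c_def using \<rho> b by (intro divide_left_mono) (auto intro!: add_pos_pos mult_pos_pos)
  have "c * (small_ball_const Lc * a powr Lc) * (small_ball_const Ls * b powr Ls) \<le>
      ED_scaled Lc Ls rs rc \<rho>"
  proof (rule ED_scaled_event_lower[OF Lc Ls \<rho> s _ a b(1,2)])
    fix x y assume "0 < x" "x \<le> a" "0 < y" "y \<le> b"
    moreover have "c \<le> 1 / (\<rho> * y + 1)" if "0 < y" "y \<le> b" for y
      unfolding c_def using \<rho> that by (intro divide_left_mono) (auto intro!: add_pos_pos mult_pos_pos)
    ultimately show "c \<le> sscc_loss \<rho> rs rc x y" using outage by simp
  qed (use \<rho> b in \<open>simp add: c_def\<close>)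
  moreover have "1 / (2 * \<rho> powr (max (1 - \<beta>) 0)) * (small_ball_const Lc * a powr Lc) *
      (small_ball_const Ls * b powr Ls) \<le> c * (small_ball_const Lc * a powr Lc) * (small_ball_const Ls * b powr Ls)"
    using small_ball_const_pos[OF Lc] small_ball_const_pos[OF Ls]
    by (intro mult_right_mono[OF mult_right_mono[OF cm]]) auto
  ultimately show ?thesis by linarith
qed

text \<open>Channel outage: a channel gain of order \<open>\<rho>\<^sup>-\<^sup>\<alpha>\<close> with \<open>\<alpha> \<ge> 1 - r\<^sub>c\<close> forces outage,
  which costs the exponent \<open>\<alpha> L\<^sub>c\<close> in probability.\<close>
lemma ED_lower_channel_outage:
  assumes Lc: "Lc > 0" and Ls: "Ls > 0" and rs: "rs \<ge> 0" and rc: "rc > 0"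
    and \<alpha>: "\<alpha> \<ge> 0" "1 - \<alpha> \<le> rc" and \<beta>: "\<beta> \<ge> 0"
  shows "power_lower_bound (ED_scaled Lc Ls rs rc) (\<alpha> * Lc + \<beta> * Ls + max (1 - \<beta>) 0)"
proof -
  define m where "m = max (1 - \<beta>) 0"
  define C where "C = small_ball_const Lc * small_ball_const Ls / (2 * 2 powr Lc)"
  have "eventually (\<lambda>\<rho>. C * \<rho> powr (- (\<alpha> * Lc + \<beta> * Ls + m)) \<le> ED_scaled Lc Ls rs rc \<rho>) at_top"
    using eventually_gt_at_top[of 1] eventually_powr_ge_2[OF rc]
  proof eventually_elim
    case (elim \<rho>)
    define a b where "a = \<rho> powr (- \<alpha>) / 2" and "b = \<rho> powr (- \<beta>)"
    have a: "0 < a" "a \<le> 1" unfolding a_def using elim \<alpha> powr_mono[of "- \<alpha>" 0 \<rho>] by auto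
    have b: "0 < b" "b \<le> 1" "b \<le> \<rho> powr (- \<beta>)"
      unfolding b_def using elim \<beta> powr_mono[of "- \<beta>" 0 \<rho>] by auto
    have "C * \<rho> powr (- (\<alpha> * Lc + \<beta> * Ls + m)) =
        1 / (2 * \<rho> powr m) * (small_ball_const Lc * a powr Lc) * (small_ball_const Ls * b powr Ls)"
    proof -
      have "\<rho> powr (- (\<alpha> * Lc + \<beta> * Ls + m)) = \<rho> powr (- \<alpha> * Lc) * \<rho> powr (- \<beta> * Ls) / \<rho> powr m"
        by (simp add: powr_diff[symmetric] powr_add[symmetric])
      moreover have "a powr Lc = \<rho> powr (- \<alpha> * Lc) / 2 powr Lc"
        unfolding a_def by (simp add: powr_divide powr_powr)
      moreover have "b powr Ls = \<rho> powr (- \<beta> * Ls)" unfolding b_def by (simp add: powr_powr)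
      ultimately show ?thesis unfolding C_def using elim by (simp add: field_simps)
    qed
    also have "\<dots> \<le> ED_scaled Lc Ls rs rc \<rho>"
      unfolding m_def
    proof (rule ED_outage_event_lower[OF Lc Ls elim(1) _ a b])
      fix x y assume "0 < x" "x \<le> a"
      then have "1 + \<rho> * x \<le> \<rho> powr rc"
        using below_rate_threshold[OF elim \<alpha>(2)] unfolding a_def by simp
      then show "sscc_loss \<rho> rs rc x y = 1 / (\<rho> * y + 1)" by (rule sscc_loss_channel_outage)
    qed (use rs rc in simp)
    finally show ?case .
  qed
  moreover have "C > 0"
    unfolding C_def using small_ball_const_pos[OF Lc] small_ball_const_pos[OF Ls] by simp
  ultimately show ?thesis unfolding power_lower_bound_def m_def by blast
qed

text \<open>Side-information outage: a side-information gain of order \<open>\<rho>\<^sup>-\<^sup>\<beta>\<close> with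
  \<open>\<beta> \<ge> 1 - r\<^sub>s\<close> makes the source description worthless.\<close>
lemma ED_lower_side_outage:
  assumes Lc: "Lc > 0" and Ls: "Ls > 0" and rs: "rs > 0" and rc: "rc \<ge> 0"
    and \<beta>: "\<beta> \<ge> 0" "1 - \<beta> \<le> rs"
  shows "power_lower_bound (ED_scaled Lc Ls rs rc) (\<beta> * Ls + max (1 - \<beta>) 0)"
proof -
  define m where "m = max (1 - \<beta>) 0"
  define C where "C = small_ball_const Lc * small_ball_const Ls / (2 * 2 powr Ls)"
  have "eventually (\<lambda>\<rho>. C * \<rho> powr (- (\<beta> * Ls + m)) \<le> ED_scaled Lc Ls rs rc \<rho>) at_top"
    using eventually_gt_at_top[of 1] eventually_powr_ge_2[OF rs]
  proof eventually_elim
    case (elim \<rho>)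
    define b where "b = \<rho> powr (- \<beta>) / 2"
    have b: "0 < b" "b \<le> 1" "b \<le> \<rho> powr (- \<beta>)"
      unfolding b_def using elim \<beta> powr_mono[of "- \<beta>" 0 \<rho>] by auto
    have "C * \<rho> powr (- (\<beta> * Ls + m)) =
        1 / (2 * \<rho> powr m) * (small_ball_const Lc * 1 powr Lc) * (small_ball_const Ls * b powr Ls)"
    proof -
      have "\<rho> powr (- (\<beta> * Ls + m)) = \<rho> powr (- \<beta> * Ls) / \<rho> powr m"
        by (simp add: powr_diff[symmetric])
      moreover have "b powr Ls = \<rho> powr (- \<beta> * Ls) / 2 powr Ls"
        unfolding b_def by (simp add: powr_divide powr_powr)
      ultimately show ?thesis unfolding C_def using elim by (simp add: field_simps)
    qed
    also have "\<dots> \<le> ED_scaled Lc Ls rs rc \<rho>"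
      unfolding m_def
    proof (rule ED_outage_event_lower[OF Lc Ls elim(1) _ _ _ b])
      fix x y assume "0 < y" "y \<le> b"
      moreover from this have "1 + \<rho> * y \<le> \<rho> powr rs"
        using below_rate_threshold[OF elim \<beta>(2)] unfolding b_def by simp
      ultimately show "sscc_loss \<rho> rs rc x y = 1 / (\<rho> * y + 1)"
        using sscc_loss_side_outage[OF elim(1) _ rc] rs by simp
    qed (use rs rc in simp_all)
    finally show ?case .
  qed
  moreover have "C > 0"
    unfolding C_def using small_ball_const_pos[OF Lc] small_ball_const_pos[OF Ls] by simp
  ultimately show ?thesis unfolding power_lower_bound_def m_def by blast
qed

section \<open>Upper bounds on the distortion: negative moments\<close>

lemma ED_upper_moments:
  assumes Lc: "Lc > 0" and Ls: "Ls > 0" and \<rho>: "\<rho> > 1" and s: "rs + rc \<ge> 0"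
    and A: "A1 \<ge> 0" "A2 \<ge> 0" "A3 \<ge> 0"
    and a: "a1 < Lc" "a2 < Lc" "a3 < Lc" and b: "b1 < Ls" "b2 < Ls" "b3 < Ls"
    and pt: "\<And>x y. 0 < x \<Longrightarrow> 0 < y \<Longrightarrow> sscc_loss \<rho> rs rc x y \<le>
      A1 * neg_pow a1 x * neg_pow b1 y + A2 * neg_pow a2 x * neg_pow b2 y +
      A3 * neg_pow a3 x * neg_pow b3 y"
  shows "ED_scaled Lc Ls rs rc \<rho> \<le>
    A1 * neg_moment Lc a1 * neg_moment Ls b1 + A2 * neg_moment Lc a2 * neg_moment Ls b2 +
    A3 * neg_moment Lc a3 * neg_moment Ls b3"
proof (rule ED_scaled_upper[OF Lc Ls \<rho> s pt])
  let ?t = "\<lambda>A a b p. ennreal (A * neg_pow a (fst p) * neg_pow b (snd p))"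
  have M: "0 \<le> neg_moment Lc a" "0 \<le> neg_moment Ls b" if "a < Lc" "b < Ls" for a b
    using neg_moment_pos[OF Lc] neg_moment_pos[OF Ls] that by (auto intro: less_imp_le)
  have "(\<integral>\<^sup>+p. ennreal (A1 * neg_pow a1 (fst p) * neg_pow b1 (snd p) +
        A2 * neg_pow a2 (fst p) * neg_pow b2 (snd p) + A3 * neg_pow a3 (fst p) * neg_pow b3 (snd p))
      \<partial>nakagami_law Lc Ls) =
      (\<integral>\<^sup>+p. ?t A1 a1 b1 p + ?t A2 a2 b2 p + ?t A3 a3 b3 p \<partial>nakagami_law Lc Ls)"
    using A by (intro nn_integral_cong) (simp add: neg_pow_nonneg ennreal_plus[symmetric] del: ennreal_plus)
  also have "\<dots> = (\<integral>\<^sup>+p. ?t A1 a1 b1 p \<partial>nakagami_law Lc Ls) + (\<integral>\<^sup>+p. ?t A2 a2 b2 p \<partial>nakagami_law Lc Ls)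
      + (\<integral>\<^sup>+p. ?t A3 a3 b3 p \<partial>nakagami_law Lc Ls)"
    by (simp add: nn_integral_add measurable_nakagami_law)
  also have "\<dots> = ennreal (A1 * neg_moment Lc a1 * neg_moment Ls b1 + A2 * neg_moment Lc a2 * neg_moment Ls b2 +
      A3 * neg_moment Lc a3 * neg_moment Ls b3)"
    using A M[OF a(1) b(1)] M[OF a(2) b(2)] M[OF a(3) b(3)]
    by (simp add: nakagami_neg_moment Lc Ls a b ennreal_plus[symmetric] del: ennreal_plus)
  finally show "(\<integral>\<^sup>+p. ennreal (A1 * neg_pow a1 (fst p) * neg_pow b1 (snd p) +
        A2 * neg_pow a2 (fst p) * neg_pow b2 (snd p) + A3 * neg_pow a3 (fst p) * neg_pow b3 (snd p))
      \<partial>nakagami_law Lc Ls) \<le> ennreal (A1 * neg_moment Lc a1 * neg_moment Ls b1 +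
        A2 * neg_moment Lc a2 * neg_moment Ls b2 + A3 * neg_moment Lc a3 * neg_moment Ls b3)"
    by simp
  show "0 \<le> A1 * neg_moment Lc a1 * neg_moment Ls b1 + A2 * neg_moment Lc a2 * neg_moment Ls b2 +
      A3 * neg_moment Lc a3 * neg_moment Ls b3"
    using A M[OF a(1) b(1)] M[OF a(2) b(2)] M[OF a(3) b(3)] by simp
qed

lemma one_le_neg_pow:
  assumes x: "x > 0" and "x \<le> t" and "\<alpha> \<ge> 0"
  shows "1 \<le> t powr \<alpha> * neg_pow \<alpha> x"
proof -
  have "1 \<le> (t / x) powr \<alpha>" using assms by (simp add: ge_one_powr_ge_zero)
  also have "\<dots> = t powr \<alpha> * neg_pow \<alpha> x"
    using assms unfolding neg_pow_def by (simp add: powr_divide powr_minus_divide)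
  finally show ?thesis .
qed

text \<open>Interpolation \<open>1/(u + v) \<le> u\<^sup>-\<^sup>\<beta> v\<^sup>\<beta>\<^sup>-\<^sup>1\<close> for \<open>0 \<le> \<beta> \<le> 1\<close>, a consequence of
  \<open>u\<^sup>\<beta> v\<^sup>1\<^sup>-\<^sup>\<beta> \<le> max u v\<close>.\<close>
lemma inv_sum_le_powr:
  fixes u v :: real
  assumes u: "u > 0" and v: "v > 0" and \<beta>: "0 \<le> \<beta>" "\<beta> \<le> 1"
  shows "1 / (u + v) \<le> u powr (- \<beta>) * v powr (\<beta> - 1)"
proof -
  define m where "m = max u v"
  have "u powr \<beta> * v powr (1 - \<beta>) \<le> m powr \<beta> * m powr (1 - \<beta>)"
    using u v \<beta> unfolding m_def by (intro mult_mono powr_mono2) auto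
  also have "\<dots> = m" using u v unfolding m_def by (simp add: powr_add[symmetric])
  also have "\<dots> \<le> u + v" using u v unfolding m_def by auto
  finally have "1 / (u + v) \<le> 1 / (u powr \<beta> * v powr (1 - \<beta>))"
    using u v by (intro divide_left_mono) auto
  also have "\<dots> = u powr (- \<beta>) * v powr (\<beta> - 1)"
    using u v by (simp add: powr_minus_divide powr_diff field_simps)
  finally show ?thesis .
qed

lemma full_rate_loss_le:
  assumes y: "y > 0" and \<rho>: "\<rho> > 1" and \<beta>: "0 \<le> \<beta>" "\<beta> \<le> 1"
  shows "1 / (\<rho> * y + \<rho> powr r) \<le> \<rho> powr (- \<beta> + r * (\<beta> - 1)) * neg_pow \<beta> y"
proof -
  have "1 / (\<rho> * y + \<rho> powr r) \<le> (\<rho> * y) powr (- \<beta>) * (\<rho> powr r) powr (\<beta> - 1)"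
    using y \<rho> \<beta> by (intro inv_sum_le_powr) auto
  also have "\<dots> = \<rho> powr (- \<beta> + r * (\<beta> - 1)) * neg_pow \<beta> y"
  proof -
    have "\<rho> powr (- \<beta>) * \<rho> powr (r * (\<beta> - 1)) = \<rho> powr (- \<beta> + r * (\<beta> - 1))"
      by (simp only: powr_add)
    then show ?thesis using y \<rho> unfolding neg_pow_def by (simp add: powr_mult powr_powr)
  qed
  finally show ?thesis .
qed

text \<open>Channel outage forces \<open>H\<^sub>0 \<le> \<rho>\<^sup>r\<^sup>c\<^sup>-\<^sup>1\<close>, which is paid for by the moment \<open>H\<^sub>0\<^sup>-\<^sup>\<alpha>\<close>.\<close>
lemma channel_outage_loss_le:
  assumes \<rho>: "\<rho> > 1" and x: "x > 0" and y: "y > 0" and outage: "1 + \<rho> * x \<le> \<rho> powr rc"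
    and \<alpha>: "\<alpha> \<ge> 0" and \<beta>: "0 \<le> \<beta>" "\<beta> \<le> 1"
  shows "1 / (\<rho> * y + 1) \<le> \<rho> powr ((rc - 1) * \<alpha> - \<beta>) * neg_pow \<alpha> x * neg_pow \<beta> y"
proof -
  have "x \<le> \<rho> powr rc / \<rho>" using outage \<rho> by (simp add: field_simps)
  then have "x \<le> \<rho> powr (rc - 1)" using \<rho> by (simp add: powr_diff)
  then have "1 \<le> (\<rho> powr (rc - 1)) powr \<alpha> * neg_pow \<alpha> x" by (rule one_le_neg_pow[OF x _ \<alpha>])
  moreover have "1 / (\<rho> * y + 1) \<le> \<rho> powr (- \<beta>) * neg_pow \<beta> y"
    using full_rate_loss_le[OF y \<rho> \<beta>, of 0] \<rho> by simp
  ultimately have "1 * (1 / (\<rho> * y + 1)) \<le>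
      ((\<rho> powr (rc - 1)) powr \<alpha> * neg_pow \<alpha> x) * (\<rho> powr (- \<beta>) * neg_pow \<beta> y)"
    using y \<rho> by (intro mult_mono) (auto simp: neg_pow_nonneg)
  also have "\<dots> = (\<rho> powr ((rc - 1) * \<alpha>) * \<rho> powr (- \<beta>)) * neg_pow \<alpha> x * neg_pow \<beta> y"
    by (simp add: powr_powr mult_ac)
  also have "\<rho> powr ((rc - 1) * \<alpha>) * \<rho> powr (- \<beta>) = \<rho> powr ((rc - 1) * \<alpha> - \<beta>)"
    by (simp only: diff_conv_add_uminus powr_add)
  finally show ?thesis by simp
qed

text \<open>Side-information outage (for \<open>\<rho>\<^sup>r\<^sup>c \<ge> 2\<close>) forces \<open>\<Gamma>\<^sub>0 \<le> 2 \<rho>\<^sup>r\<^sup>s\<^sup>-\<^sup>1\<close>, which is paid for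
  by the moment \<open>\<Gamma>\<^sub>0\<^sup>-\<^sup>\<gamma>\<close>.\<close>
lemma side_outage_loss_le:
  assumes \<rho>: "\<rho> > 1" and y: "y > 0" and rc: "2 \<le> \<rho> powr rc"
    and outage: "\<rho> powr rc \<le> 1 + (\<rho> powr (rs + rc) - 1) / (1 + \<rho> * y)" and \<gamma>: "\<gamma> \<ge> 0"
  shows "1 / (\<rho> * y + 1) \<le> 2 powr \<gamma> * \<rho> powr ((rs - 1) * \<gamma> - 1) * neg_pow (\<gamma> + 1) y"
proof -
  have d: "1 + \<rho> * y > 0" using \<rho> y by (simp add: add_pos_pos)
  have "(\<rho> powr rc - 1) * (1 + \<rho> * y) \<le> \<rho> powr (rs + rc) - 1"
    using outage d by (simp add: field_simps)
  moreover have "\<rho> powr rc / 2 \<le> \<rho> powr rc - 1" using rc by simp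
  ultimately have "\<rho> powr rc / 2 * (1 + \<rho> * y) \<le> \<rho> powr (rs + rc)"
    using d by (smt (verit) mult_right_mono)
  then have "\<rho> powr rc * (1 + \<rho> * y) \<le> \<rho> powr rc * (2 * \<rho> powr rs)"
    by (simp add: powr_add algebra_simps)
  then have "1 + \<rho> * y \<le> 2 * \<rho> powr rs" using \<rho> by simp
  then have "y \<le> 2 * \<rho> powr rs / \<rho>" using \<rho> by (simp add: field_simps)
  then have "y \<le> 2 * \<rho> powr (rs - 1)" using \<rho> by (simp add: powr_diff)
  then have "1 \<le> (2 * \<rho> powr (rs - 1)) powr \<gamma> * neg_pow \<gamma> y" by (rule one_le_neg_pow[OF y _ \<gamma>])
  moreover have "1 / (\<rho> * y + 1) \<le> \<rho> powr (- 1) * neg_pow 1 y"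
    using full_rate_loss_le[OF y \<rho>, of 1 0] \<rho> by simp
  ultimately have "1 * (1 / (\<rho> * y + 1)) \<le>
      ((2 * \<rho> powr (rs - 1)) powr \<gamma> * neg_pow \<gamma> y) * (\<rho> powr (- 1) * neg_pow 1 y)"
    using y \<rho> by (intro mult_mono) (auto simp: neg_pow_nonneg)
  also have "\<dots> = 2 powr \<gamma> * (\<rho> powr ((rs - 1) * \<gamma>) * \<rho> powr (- 1)) * (neg_pow \<gamma> y * neg_pow 1 y)"
    using \<rho> by (simp add: powr_powr powr_mult mult_ac)
  also have "\<rho> powr ((rs - 1) * \<gamma>) * \<rho> powr (- 1) = \<rho> powr ((rs - 1) * \<gamma> - 1)"
    by (simp only: diff_conv_add_uminus powr_add)
  finally show ?thesis by (simp add: neg_pow_add mult.assoc)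
qed

text \<open>Pointwise majorant for the pure channel-coding scheme \<open>r\<^sub>s = 0\<close>: channel outage costs
  the negative powers of orders \<open>\<alpha>\<close> and \<open>\<beta>\<close>, successful decoding only that of order \<open>\<beta>\<close>.\<close>
lemma sscc_loss_le_no_source_rate:
  assumes \<rho>: "\<rho> > 1" and r: "r > 0" and x: "x > 0" and y: "y > 0"
    and \<alpha>: "0 \<le> \<alpha>" and \<beta>: "0 \<le> \<beta>" "\<beta> \<le> 1"
  shows "sscc_loss \<rho> 0 r x y \<le> \<rho> powr ((r - 1) * \<alpha> - \<beta>) * neg_pow \<alpha> x * neg_pow \<beta> y +
    \<rho> powr (- \<beta> + r * (\<beta> - 1)) * neg_pow 0 x * neg_pow \<beta> y + 0 * neg_pow 0 x * neg_pow 0 y"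
    (is "_ \<le> ?T1 + ?T2 + _")
proof (cases "1 + \<rho> * x \<le> \<rho> powr r")
  case True
  then have "sscc_loss \<rho> 0 r x y \<le> ?T1"
    unfolding sscc_loss_channel_outage[OF True] by (rule channel_outage_loss_le[OF \<rho> x y _ \<alpha> \<beta>])
  moreover have "0 \<le> ?T2" by (simp add: neg_pow_nonneg)
  ultimately show ?thesis by simp
next
  case False
  have "1 < \<rho> powr r" using powr_less_mono[of 0 r \<rho>] r \<rho> by simp
  moreover have "1 < 1 + \<rho> * y" using \<rho> y by simp
  ultimately have "(\<rho> powr r - 1) / (1 + \<rho> * y) < \<rho> powr r - 1"
    by (simp add: divide_less_eq)
  then have "sscc_loss \<rho> 0 r x y = 1 / (\<rho> * y + \<rho> powr r)"
    using False unfolding sscc_loss_def by simp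
  also have "\<dots> \<le> \<rho> powr (- \<beta> + r * (\<beta> - 1)) * neg_pow \<beta> y"
    by (rule full_rate_loss_le[OF y \<rho> \<beta>])
  finally have "sscc_loss \<rho> 0 r x y \<le> ?T2" by (simp add: neg_pow_zero[OF x])
  moreover have "0 \<le> ?T1" by (simp add: neg_pow_nonneg)
  ultimately show ?thesis by simp
qed

lemma ED_upper_no_source_rate:
  assumes Lc: "Lc > 0" and Ls: "Ls > 0" and r: "r > 0"
    and \<alpha>: "0 \<le> \<alpha>" "\<alpha> < Lc" and \<beta>: "0 \<le> \<beta>" "\<beta> \<le> 1" "\<beta> < Ls"
  shows "power_upper_bound (ED_scaled Lc Ls 0 r) (min ((1 - r) * \<alpha> + \<beta>) (\<beta> + r * (1 - \<beta>)))"
proof -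
  define e where "e = min ((1 - r) * \<alpha> + \<beta>) (\<beta> + r * (1 - \<beta>))"
  define C where "C = neg_moment Lc \<alpha> * neg_moment Ls \<beta> + neg_moment Ls \<beta>"
  have M: "neg_moment Lc \<alpha> > 0" "neg_moment Ls \<beta> > 0"
    using neg_moment_pos Lc Ls \<alpha> \<beta> by auto
  have "eventually (\<lambda>\<rho>. ED_scaled Lc Ls 0 r \<rho> \<le> C * \<rho> powr (- e)) at_top"
    using eventually_gt_at_top[of 1]
  proof eventually_elim
    case (elim \<rho>)
    define A1 A2 where "A1 = \<rho> powr ((r - 1) * \<alpha> - \<beta>)" and "A2 = \<rho> powr (- \<beta> + r * (\<beta> - 1))"
    have "ED_scaled Lc Ls 0 r \<rho> \<le> A1 * neg_moment Lc \<alpha> * neg_moment Ls \<beta> +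
        A2 * neg_moment Lc 0 * neg_moment Ls \<beta> + 0 * neg_moment Lc 0 * neg_moment Ls 0"
      unfolding A1_def A2_def
      by (rule ED_upper_moments[OF Lc Ls elim _ _ _ _ \<alpha>(2) _ _ \<beta>(3) \<beta>(3) _
            sscc_loss_le_no_source_rate[OF elim r _ _ \<alpha>(1) \<beta>(1,2)]])
         (use Lc Ls r in auto)
    also have "\<dots> \<le> \<rho> powr (- e) * (neg_moment Lc \<alpha> * neg_moment Ls \<beta>) + \<rho> powr (- e) * neg_moment Ls \<beta>"
    proof -
      have "A1 \<le> \<rho> powr (- e)" "A2 \<le> \<rho> powr (- e)"
        unfolding A1_def A2_def e_def using elim by (auto intro!: powr_mono simp: algebra_simps)
      then show ?thesis
        using M neg_moment_zero[OF Lc]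
        by (simp add: mult.assoc add_mono mult_right_mono)
    qed
    also have "\<dots> = C * \<rho> powr (- e)" unfolding C_def by (simp add: algebra_simps)
    finally show ?case .
  qed
  moreover have "C > 0" unfolding C_def using M by (simp add: add_pos_pos)
  ultimately show ?thesis unfolding power_upper_bound_def e_def by blast
qed

text \<open>Pointwise majorant for general rates: channel outage, side-information outage and
  successful decoding are paid for by the negative powers \<open>(\<alpha>, 1)\<close>, \<open>(0, \<gamma> + 1)\<close> and
  \<open>(0, 0)\<close>.\<close>
lemma sscc_loss_le_general_rates:
  assumes \<rho>: "\<rho> > 1" and rc: "2 \<le> \<rho> powr rc" and x: "x > 0" and y: "y > 0"
    and \<alpha>: "0 \<le> \<alpha>" and \<gamma>: "0 \<le> \<gamma>"
  shows "sscc_loss \<rho> rs rc x y \<le> \<rho> powr ((rc - 1) * \<alpha> - 1) * neg_pow \<alpha> x * neg_pow 1 y +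
    2 powr \<gamma> * \<rho> powr ((rs - 1) * \<gamma> - 1) * neg_pow 0 x * neg_pow (\<gamma> + 1) y +
    \<rho> powr (- (rs + rc)) * neg_pow 0 x * neg_pow 0 y"
    (is "_ \<le> ?T1 + ?T2 + ?T3")
proof -
  have T: "0 \<le> ?T1" "0 \<le> ?T2" "0 \<le> ?T3" by (simp_all add: neg_pow_nonneg)
  consider (channel) "1 + \<rho> * x \<le> \<rho> powr rc"
    | (side) "\<rho> powr rc \<le> 1 + (\<rho> powr (rs + rc) - 1) / (1 + \<rho> * y)"
    | (decoded) "sscc_loss \<rho> rs rc x y = 1 / (\<rho> * y + \<rho> powr (rs + rc))"
    unfolding sscc_loss_def by fastforce
  then show ?thesis
  proof cases
    case channel
    then have "sscc_loss \<rho> rs rc x y \<le> ?T1"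
      unfolding sscc_loss_channel_outage[OF channel]
      by (rule channel_outage_loss_le[OF \<rho> x y _ \<alpha>]) simp_all
    then show ?thesis using T by simp
  next
    case side
    then have "sscc_loss \<rho> rs rc x y \<le> ?T2"
      unfolding sscc_loss_def using side_outage_loss_le[OF \<rho> y rc side \<gamma>]
      by (simp add: neg_pow_zero[OF x])
    then show ?thesis using T by simp
  next
    case decoded
    have "1 / (\<rho> * y + \<rho> powr (rs + rc)) \<le> 1 / \<rho> powr (rs + rc)"
      using \<rho> y by (intro divide_left_mono) (auto intro!: mult_pos_pos add_pos_pos)
    also have "\<dots> = ?T3"
      by (simp add: neg_pow_zero[OF x] neg_pow_zero[OF y] powr_minus_divide[symmetric])
    finally show ?thesis using T decoded by simp
  qed
qed

lemma ED_upper_general_rates: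
  assumes Lc: "Lc > 0" and rs: "rs \<ge> 0" and rc: "rc > 0"
    and \<alpha>: "0 \<le> \<alpha>" "\<alpha> < Lc" and \<gamma>: "0 \<le> \<gamma>" "\<gamma> + 1 < Ls"
  shows "power_upper_bound (ED_scaled Lc Ls rs rc)
    (min (min ((1 - rc) * \<alpha> + 1) ((1 - rs) * \<gamma> + 1)) (rs + rc))"
proof -
  have Ls: "Ls > 0" "1 < Ls" using \<gamma> by auto
  define e where "e = min (min ((1 - rc) * \<alpha> + 1) ((1 - rs) * \<gamma> + 1)) (rs + rc)"
  define C where "C = neg_moment Lc \<alpha> * neg_moment Ls 1 + 2 powr \<gamma> * neg_moment Ls (\<gamma> + 1) + 1"
  have M: "neg_moment Lc \<alpha> > 0" "neg_moment Ls 1 > 0" "neg_moment Ls (\<gamma> + 1) > 0"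
    using neg_moment_pos Lc Ls \<alpha> \<gamma> by auto
  have "eventually (\<lambda>\<rho>. ED_scaled Lc Ls rs rc \<rho> \<le> C * \<rho> powr (- e)) at_top"
    using eventually_gt_at_top[of 1] eventually_powr_ge_2[OF rc]
  proof eventually_elim
    case (elim \<rho>)
    define A1 A2 A3 where "A1 = \<rho> powr ((rc - 1) * \<alpha> - 1)"
      and "A2 = 2 powr \<gamma> * \<rho> powr ((rs - 1) * \<gamma> - 1)" and "A3 = \<rho> powr (- (rs + rc))"
    have "ED_scaled Lc Ls rs rc \<rho> \<le> A1 * neg_moment Lc \<alpha> * neg_moment Ls 1 +
        A2 * neg_moment Lc 0 * neg_moment Ls (\<gamma> + 1) + A3 * neg_moment Lc 0 * neg_moment Ls 0"
      unfolding A1_def A2_def A3_def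
      by (rule ED_upper_moments[OF Lc Ls(1) elim(1) _ _ _ _ \<alpha>(2) _ _ Ls(2) \<gamma>(2) _
            sscc_loss_le_general_rates[OF elim _ _ \<alpha>(1) \<gamma>(1)]])
         (use Lc Ls rs rc in auto)
    also have "\<dots> \<le> \<rho> powr (- e) * (neg_moment Lc \<alpha> * neg_moment Ls 1) +
        \<rho> powr (- e) * (2 powr \<gamma> * neg_moment Ls (\<gamma> + 1)) + \<rho> powr (- e)"
    proof -
      have "A1 \<le> \<rho> powr (- e)" "\<rho> powr ((rs - 1) * \<gamma> - 1) \<le> \<rho> powr (- e)" "A3 \<le> \<rho> powr (- e)"
        unfolding A1_def A3_def e_def using elim by (auto intro!: powr_mono simp: algebra_simps)
      then show ?thesis
        using M neg_moment_zero[OF Lc] neg_moment_zero[OF Ls(1)] unfolding A2_def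
        by (intro add_mono) (auto intro!: mult_right_mono simp: mult_ac)
    qed
    also have "\<dots> = C * \<rho> powr (- e)" unfolding C_def by (simp add: algebra_simps)
    finally show ?case .
  qed
  moreover have "C > 0" unfolding C_def using M by (simp add: add_pos_pos)
  ultimately show ?thesis unfolding power_upper_bound_def e_def by blast
qed

section \<open>Optimising the rate exponents\<close>

lemma Delta_s_eqI:
  assumes attained: "\<exists>rc rs. rc > 0 \<and> rs \<ge> 0 \<and> (log_decay (ED_scaled Lc Ls rs rc) \<longlongrightarrow> D) at_top"
    and bound: "\<And>rc rs l. rc > 0 \<Longrightarrow> rs \<ge> 0 \<Longrightarrow>
      (log_decay (ED_scaled Lc Ls rs rc) \<longlongrightarrow> l) at_top \<Longrightarrow> l \<le> D"
  shows "Delta_s Ls Lc = D"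
  unfolding Delta_s_def log_decay_def[symmetric] ED_scaled_def[symmetric]
  using assms by (intro cSup_eq_maximum) blast+

text \<open>For \<open>L\<^sub>s \<le> 1\<close> the optimal channel rate exponent \<open>r = L\<^sub>c / (L\<^sub>c + 1 - L\<^sub>s)\<close> balances the
  channel outage exponent \<open>(1 - r) L\<^sub>c + L\<^sub>s\<close> against the exponent \<open>L\<^sub>s + r (1 - L\<^sub>s)\<close> of the
  distortion after successful decoding.\<close>
lemma small_Ls_identities:
  fixes Lc Ls :: real
  assumes Lc: "Lc > 0" and Ls: "0 < Ls" "Ls \<le> 1"
  defines "D \<equiv> 1 - (1 - Ls)\<^sup>2 / (Lc + 1 - Ls)" and "r \<equiv> Lc / (Lc + 1 - Ls)"
  shows "0 < r" "r \<le> 1" "D = (1 - r) * Lc + Ls" "D = Ls + r * (1 - Ls)" "Ls \<le> D"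
proof -
  have den: "Lc + 1 - Ls > 0" using Lc Ls by simp
  show r0: "0 < r" and "r \<le> 1" unfolding r_def using Lc den Ls by simp_all
  show "D = (1 - r) * Lc + Ls" and D2: "D = Ls + r * (1 - Ls)"
    unfolding D_def r_def using den by (simp_all add: field_simps power2_eq_square)
  show "Ls \<le> D" using D2 r0 Ls by simp
qed

lemma exponent_small_Ls_attained:
  assumes Lc: "Lc > 0" and Ls: "0 < Ls" "Ls \<le> 1"
  defines "D \<equiv> 1 - (1 - Ls)\<^sup>2 / (Lc + 1 - Ls)"
  shows "\<exists>rc rs. rc > 0 \<and> rs \<ge> 0 \<and> (log_decay (ED_scaled Lc Ls rs rc) \<longlongrightarrow> D) at_top"
proof -
  define r where "r = Lc / (Lc + 1 - Ls)"
  note id = small_Ls_identities[OF Lc Ls, folded D_def r_def]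
  have "(log_decay (ED_scaled Lc Ls 0 r) \<longlongrightarrow> D) at_top"
  proof (rule log_decay_tendsto)
    show "D > 0" using id(5) Ls by simp
    have "power_lower_bound (ED_scaled Lc Ls 0 r) ((1 - r) * Ls + max (1 - (1 - r)) (0 + r))"
      by (rule ED_lower_full_rate[OF Lc Ls(1)]) (use id(1,2) in auto)
    moreover have "(1 - r) * Ls + max (1 - (1 - r)) (0 + r) = D" using id(4) by (simp add: algebra_simps)
    ultimately show "power_lower_bound (ED_scaled Lc Ls 0 r) D" by simp
  next
    fix t :: real assume t: "0 < t" "t < 1"
    have "t * D \<le> min ((1 - r) * (Lc * t) + Ls * t) (Ls * t + r * (1 - Ls * t))"
    proof -
      have "t * D = (1 - r) * (Lc * t) + Ls * t" unfolding id(3) by (simp add: algebra_simps)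
      moreover have "Ls * t + r * (1 - Ls * t) - t * D = r * (1 - t)"
        unfolding id(4) by (simp add: algebra_simps)
      moreover have "0 \<le> r * (1 - t)" using id(1) t by simp
      ultimately show ?thesis by simp
    qed
    then show "power_upper_bound (ED_scaled Lc Ls 0 r) (t * D)"
      using Ls t Lc
      by (intro power_upper_bound_mono[OF ED_upper_no_source_rate[OF Lc Ls(1) id(1),
            where \<alpha> = "Lc * t" and \<beta> = "Ls * t"]])
         (auto simp: mult_le_one mult_less_cancel_left1)
  qed
  then show ?thesis using id(1) by blast
qed

text \<open>For \<open>L\<^sub>s \<le> 1\<close> no rate pair does better: a positive source rate is killed by
  side-information outage (exponent \<open>L\<^sub>s\<close>), and without source bits a channel rate below
  (above) the balancing one loses on the decoding (outage) exponent.\<close>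
lemma exponent_small_Ls_bound:
  assumes Lc: "Lc > 0" and Ls: "0 < Ls" "Ls \<le> 1"
    and rc: "rc > 0" and rs: "rs \<ge> 0" and lim: "(log_decay (ED_scaled Lc Ls rs rc) \<longlongrightarrow> l) at_top"
  shows "l \<le> 1 - (1 - Ls)\<^sup>2 / (Lc + 1 - Ls)"
proof -
  define D r where "D = 1 - (1 - Ls)\<^sup>2 / (Lc + 1 - Ls)" and "r = Lc / (Lc + 1 - Ls)"
  note id = small_Ls_identities[OF Lc Ls, folded D_def r_def]
  have "l \<le> D"
  proof (cases "rs > 0")
    case True
    have "l \<le> 1 * Ls + max (1 - 1) 0"
      by (rule power_lower_bound_limit[OF ED_lower_side_outage[OF Lc Ls(1) True] lim]) (use rc rs in auto)
    then show ?thesis using id(5) by simp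
  next
    case False
    then have rs0: "rs = 0" using rs by simp
    show ?thesis
    proof (cases "rc \<le> r")
      case True
      have "l \<le> (1 - rc) * Ls + max (1 - (1 - rc)) (rs + rc)"
        using lim unfolding rs0
        by (intro power_lower_bound_limit[OF ED_lower_full_rate[OF Lc Ls(1)]]) (use True id(2) rc in auto)
      also have "\<dots> \<le> D"
        using True Ls rs0 mult_right_mono[OF True, of "1 - Ls"] unfolding id(4) by (simp add: algebra_simps)
      finally show ?thesis .
    next
      case False
      define \<alpha> where "\<alpha> = max 0 (1 - rc)"
      have "l \<le> \<alpha> * Lc + 1 * Ls + max (1 - 1) 0"
        by (rule power_lower_bound_limit[OF ED_lower_channel_outage[OF Lc Ls(1) rs rc] lim])
           (auto simp: \<alpha>_def)
      also have "\<dots> \<le> D"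
        using False id(2) Lc mult_right_mono[of \<alpha> "1 - r" Lc] unfolding id(3) \<alpha>_def by simp
      finally show ?thesis .
    qed
  qed
  then show ?thesis unfolding D_def .
qed

text \<open>The closed-form optimum for \<open>L\<^sub>s > 1\<close>: with \<open>Q = L\<^sub>s (L\<^sub>c + 1) - 1\<close> the rate exponents
  \<open>r\<^sub>c = L\<^sub>c L\<^sub>s / Q\<close> and \<open>r\<^sub>s = (L\<^sub>c + 1)(L\<^sub>s - 1) / Q\<close> equalise the three competing exponents.\<close>
lemma large_Ls_identities:
  fixes Lc Ls :: real
  assumes Lc: "Lc > 0" and Ls: "Ls > 1"
  defines "D \<equiv> (Ls * (2 * Lc + 1) - Lc - 1) / (Ls * (Lc + 1) - 1)"
    and "rc \<equiv> Lc * Ls / (Ls * (Lc + 1) - 1)" and "rs \<equiv> (Lc + 1) * (Ls - 1) / (Ls * (Lc + 1) - 1)"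
  shows "D > 1" and "0 < rc" "rc < 1" and "0 < rs" "rs < 1"
    and "rs + rc = D" and "(1 - rc) * Lc + 1 = D" and "(1 - rs) * (Ls - 1) + 1 = D"
    and "(Ls - 1 + Lc) * (D - 1) = Lc * (Ls - 1) * (2 - D)"
proof -
  define Q where "Q = Ls * (Lc + 1) - 1"
  have Q: "Q > 0" unfolding Q_def using Lc Ls by (smt (verit) mult_less_cancel_left1 mult_pos_pos)
  then have Qn: "Q \<noteq> 0" by simp
  have D: "D = (Ls * (2 * Lc + 1) - Lc - 1) / Q" unfolding D_def Q_def ..
  have rc: "rc = Lc * Ls / Q" and rs: "rs = (Lc + 1) * (Ls - 1) / Q"
    unfolding rc_def rs_def Q_def by simp_all
  have "D - 1 = Lc * (Ls - 1) / Q"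
    using Qn unfolding D by (simp add: field_simps; simp add: Q_def algebra_simps)
  moreover have "Lc * (Ls - 1) / Q > 0" using Q Lc Ls by simp
  ultimately show "D > 1" by linarith
  show "0 < rc" "0 < rs" unfolding rc rs using Q Lc Ls by simp_all
  show "rc < 1" "rs < 1" unfolding rc rs using Q Lc Ls
    by (simp_all add: field_simps Q_def algebra_simps)
  show "rs + rc = D" "(1 - rc) * Lc + 1 = D" "(1 - rs) * (Ls - 1) + 1 = D"
      "(Ls - 1 + Lc) * (D - 1) = Lc * (Ls - 1) * (2 - D)"
    using Qn unfolding D rc rs by (simp_all add: field_simps; simp add: Q_def algebra_simps)+
qed

lemma exponent_large_Ls_attained:
  assumes Lc: "Lc > 0" and Ls: "Ls > 1"
  defines "D \<equiv> (Ls * (2 * Lc + 1) - Lc - 1) / (Ls * (Lc + 1) - 1)"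
  shows "\<exists>rc rs. rc > 0 \<and> rs \<ge> 0 \<and> (log_decay (ED_scaled Lc Ls rs rc) \<longlongrightarrow> D) at_top"
proof -
  have Ls0: "Ls > 0" using Ls by simp
  define rc rs where "rc = Lc * Ls / (Ls * (Lc + 1) - 1)"
    and "rs = (Lc + 1) * (Ls - 1) / (Ls * (Lc + 1) - 1)"
  note id = large_Ls_identities[OF Lc Ls, folded D_def rc_def rs_def]
  have "(log_decay (ED_scaled Lc Ls rs rc) \<longlongrightarrow> D) at_top"
  proof (rule log_decay_tendsto)
    show "D > 0" using id(1) by simp
    have "power_lower_bound (ED_scaled Lc Ls rs rc) (0 * Ls + max (1 - 0) (rs + rc))"
      by (rule ED_lower_full_rate[OF Lc Ls0]) (use id(2,4) in auto)
    then show "power_lower_bound (ED_scaled Lc Ls rs rc) D" using id(1,6) by simp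
  next
    fix t :: real assume t: "0 < t" "t < 1"
    have "(1 - rc) * (Lc * t) + 1 = t * ((1 - rc) * Lc + 1) + (1 - t)"
      and "(1 - rs) * ((Ls - 1) * t) + 1 = t * ((1 - rs) * (Ls - 1) + 1) + (1 - t)"
      by (simp_all add: algebra_simps)
    then have "(1 - rc) * (Lc * t) + 1 = t * D + (1 - t)"
      and "(1 - rs) * ((Ls - 1) * t) + 1 = t * D + (1 - t)"
      unfolding id(7,8) .
    moreover have "t * D \<le> D" using t id(1) by simp
    ultimately have "t * D \<le> min (min ((1 - rc) * (Lc * t) + 1) ((1 - rs) * ((Ls - 1) * t) + 1)) (rs + rc)"
      using t id(6) by simp
    moreover have "(Ls - 1) * t < (Ls - 1) * 1"
      using t Ls by (intro mult_strict_left_mono) auto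
    then have "(Ls - 1) * t + 1 < Ls" by simp
    ultimately show "power_upper_bound (ED_scaled Lc Ls rs rc) (t * D)"
      using t Lc Ls id(2,4)
      by (intro power_upper_bound_mono[OF ED_upper_general_rates[OF Lc,
            where \<alpha> = "Lc * t" and \<gamma> = "(Ls - 1) * t"]])
         (auto simp: mult_less_cancel_left1)
  qed
  then show ?thesis using id(2,4) by (intro exI[of _ rc] exI[of _ rs]) simp
qed

text \<open>For \<open>L\<^sub>s > 1\<close> no rate pair does better: an exponent above \<open>D\<close> would have to beat the
  sum rate \<open>r\<^sub>s + r\<^sub>c\<close>, the channel outage exponent \<open>L\<^sub>c (1 - r\<^sub>c) + 1\<close> and the side outage
  exponent \<open>r\<^sub>s + L\<^sub>s (1 - r\<^sub>s)\<close> at once, which the identity of \<open>large_Ls_identities\<close> forbids.\<close>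
lemma exponent_large_Ls_bound:
  assumes Lc: "Lc > 0" and Ls: "Ls > 1"
    and rc: "rc > 0" and rs: "rs \<ge> 0" and lim: "(log_decay (ED_scaled Lc Ls rs rc) \<longlongrightarrow> l) at_top"
  shows "l \<le> (Ls * (2 * Lc + 1) - Lc - 1) / (Ls * (Lc + 1) - 1)"
proof -
  have Ls0: "Ls > 0" using Ls by simp
  define D where "D = (Ls * (2 * Lc + 1) - Lc - 1) / (Ls * (Lc + 1) - 1)"
  note id = large_Ls_identities[OF Lc Ls, folded D_def]
  have full: "l \<le> max 1 (rs + rc)"
    using power_lower_bound_limit[OF ED_lower_full_rate[OF Lc Ls0, of rs rc 0] lim] rs rc by simp
  have "l \<le> D"
  proof (cases "rs < 1 \<and> rc < 1 \<and> 1 < rs + rc")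
    case False
    moreover have "rs \<ge> 1 \<Longrightarrow> l \<le> 0 * Ls + max (1 - 0) 0"
      by (rule power_lower_bound_limit[OF ED_lower_side_outage[OF Lc Ls0] lim]) (use rc in auto)
    moreover have "rc \<ge> 1 \<Longrightarrow> l \<le> 0 * Lc + 0 * Ls + max (1 - 0) 0"
      by (rule power_lower_bound_limit[OF ED_lower_channel_outage[OF Lc Ls0 rs rc] lim]) auto
    ultimately show ?thesis using full id(1) by (auto simp: not_less)
  next
    case True
    then have "rs > 0" by simp
    have side: "l \<le> (1 - rs) * Ls + max (1 - (1 - rs)) 0"
      by (rule power_lower_bound_limit[OF ED_lower_side_outage[OF Lc Ls0 \<open>rs > 0\<close>] lim])
         (use True rc in auto)
    have channel: "l \<le> (1 - rc) * Lc + 0 * Ls + max (1 - 0) 0"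
      by (rule power_lower_bound_limit[OF ED_lower_channel_outage[OF Lc Ls0 rs rc] lim])
         (use True in auto)
    show ?thesis
    proof (rule ccontr)
      assume "\<not> l \<le> D"
      then have h1: "D < rs + rc" and h2: "D - 1 < Lc * (1 - rc)" and h3: "D - 1 < (Ls - 1) * (1 - rs)"
        using full side channel True by (auto simp: algebra_simps)
      have "(Ls - 1) * (D - 1) < (Ls - 1) * (Lc * (1 - rc))" using h2 Ls by simp
      moreover have "Lc * (D - 1) < Lc * ((Ls - 1) * (1 - rs))" using h3 Lc by simp
      moreover have "Lc * (Ls - 1) * ((1 - rc) + (1 - rs)) < Lc * (Ls - 1) * (2 - D)"
        using h1 Lc Ls by (intro mult_strict_left_mono) auto
      ultimately show False using id(9) by (simp add: algebra_simps)
    qed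
  qed
  then show ?thesis unfolding D_def .
qed

theorem lemma8:
  fixes Lc Ls :: real
  assumes "Lc > 0" and "Ls > 0"
  shows "Delta_s Ls Lc =
    (if Ls \<le> 1 then 1 - (1 - Ls)\<^sup>2 / (Lc + 1 - Ls)
     else (Ls * (2 * Lc + 1) - Lc - 1) / (Ls * (Lc + 1) - 1))"
proof (cases "Ls \<le> 1")
  case True
  have "Delta_s Ls Lc = 1 - (1 - Ls)\<^sup>2 / (Lc + 1 - Ls)"
    using exponent_small_Ls_attained[OF assms True] exponent_small_Ls_bound[OF assms True]
    by (rule Delta_s_eqI)
  then show ?thesis using True by simp
next
  case False
  then have "Ls > 1" by simp
  then have "Delta_s Ls Lc = (Ls * (2 * Lc + 1) - Lc - 1) / (Ls * (Lc + 1) - 1)"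
    using exponent_large_Ls_attained[OF assms(1)] exponent_large_Ls_bound[OF assms(1)]
    by (intro Delta_s_eqI)
  then show ?thesis using False by simp
qed

end
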